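(* For any positive integers $k,l$, $$\zeta^t(k+1,\{1\}^{l-1})=\sum_{j=1}^{\min\{k,l\}}(-1)^{j-1}\sum_{\substack{k_1+\cdots+k_j=k,\ l_1+\cdots+l_j=l\\ k_i,l_i\ge1}}\frac{1-t^{l_j}}{1-t}\,Z^t\big(x^{k_1+l_1-1}(-tx+y)\cdots x^{k_{j-1}+l_{j-1}-1}(-tx+y)x^{k_j+l_j-1}y\big),$$ or equivalently $$\zeta^t(k+1,\{1\}^{l-1})=\sum_{j=1}^{\min\{k,l\}}(-1)^{j-1}\sum_{\substack{k_1+\cdots+k_j=k,\ l_1+\cdots+l_j=l\\ k_i,l_i\ge1}}\frac{1-t^{l_j}}{1-t}\,\zeta(k_1+l_1,\ldots,k_j+l_j).$$ In particular, $$\zeta^\star(k+1,\{1\}^{l-1})=\sum_{j=1}^{\min\{k,l\}}(-1)^{j-1}\sum_{\substack{k_1+\cdots+k_j=k,\ l_1+\cdots+l_j=l\\ k_i,l_i\ge1}}l_j\,\zeta(k_1+l_1,\ldots,k_j+l_j).$$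
   Context: $\{1\}^{m}$ denotes $m$ repetitions of $1$; $\frac{1-t^{l_j}}{1-t}$ means the polynomial $1+t+\cdots+t^{l_j-1}$. For positive integers with $k_1\ge2$, $\zeta(k_1,\ldots,k_n)=\sum_{m_1>\cdots>m_n>0}\prod m_j^{-k_j}$, $\zeta^\star(k_1,\ldots,k_n)=\sum_{m_1\ge\cdots\ge m_n>0}\prod m_j^{-k_j}$, and $\zeta^t(k_1,\ldots,k_n)=\sum_{\mathbf p}t^{n-\mathrm{dep}(\mathbf p)}\zeta(\mathbf p)$ over all sequences $\mathbf p$ obtained from $(k_1,\ldots,k_n)$ by replacing each separating comma by a comma or a plus sign ($\mathrm{dep}$ = length). $\mathfrak{h}_t=\mathbb{Q}[t]\langle x,y\rangle$, $\mathfrak{h}^0_t=\mathbb{Q}[t]+x\mathfrak{h}_ty$, $z_k=x^{k-1}y$. $\sigma_t$ is the algebra automorphism with $x\mapsto x,y\mapsto tx+y$; $S_t$ is $\mathbb{Q}[t]$-linear with $S_t(1)=1$, $S_t(wa)=\sigma_t(w)a$ for words $w$, letters $a$. $Z:\mathfrak{h}^0_t\to\mathbb{R}[t]$ is $\mathbb{Q}[t]$-linear with $Z(1)=1$, $Z(z_{k_1}\cdots z_{k_n})=\zeta(k_1,\ldots,k_n)$, and $Z^t=Z\circ S_t$. *)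

theory Defs
  imports "HOL-Analysis.Analysis" "HOL-Computational_Algebra.Polynomial"
begin

text \<open>zeta(k_1,...,k_n) = sum over m_1 > ... > m_n > 0 of prod m_i^(-k_i).
  The summands are nonnegative; for admissible indices (k_1 \<ge> 2) the sum converges.\<close>
definition mzv :: "nat list \<Rightarrow> real" where
  "mzv ks = infsum (\<lambda>ms. \<Prod>i<length ks. 1 / (real (ms ! i)) ^ (ks ! i))
     {ms. length ms = length ks \<and> sorted_wrt (>) ms \<and> (\<forall>m\<in>set ms. 0 < m)}"

definition mzv_star :: "nat list \<Rightarrow> real" where
  "mzv_star ks = infsum (\<lambda>ms. \<Prod>i<length ks. 1 / (real (ms ! i)) ^ (ks ! i))
     {ms. length ms = length ks \<and> sorted_wrt (\<ge>) ms \<and> (\<forall>m\<in>set ms. 0 < m)}"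

text \<open>All index sequences obtained from ks by replacing each comma by a comma or a plus,
  paired with the number of plus signs used (= n - dep p).\<close>
fun merges :: "nat list \<Rightarrow> (nat list \<times> nat) list" where
  "merges [] = [([], 0)]"
| "merges [k] = [([k], 0)]"
| "merges (k # k' # ks) =
     map (\<lambda>(p, c). (k # p, c)) (merges (k' # ks)) @
     map (\<lambda>(p, c). ((k + hd p) # tl p, Suc c)) (merges (k' # ks))"

definition zeta_t :: "nat list \<Rightarrow> real poly" where
  "zeta_t ks = (\<Sum>(p, c) \<leftarrow> merges ks. monom (mzv p) c)"

datatype letter = X | Y

text \<open>Elements of h_t represented as finite formal combinations (coefficient, word).\<close>
type_synonym comb = "(real poly \<times> letter list) list"

definition cmul :: "comb \<Rightarrow> comb \<Rightarrow> comb" where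
  "cmul a b = concat (map (\<lambda>(c, v). map (\<lambda>(d, w). (c * d, v @ w)) b) a)"

text \<open>sigma_t: x \<mapsto> x, y \<mapsto> t x + y, applied to a word.\<close>
fun sigma_t :: "letter list \<Rightarrow> comb" where
  "sigma_t [] = [(1, [])]"
| "sigma_t (X # w) = map (\<lambda>(c, v). (c, X # v)) (sigma_t w)"
| "sigma_t (Y # w) = map (\<lambda>(c, v). (c * [:0, 1:], X # v)) (sigma_t w) @
                     map (\<lambda>(c, v). (c, Y # v)) (sigma_t w)"

definition S_t :: "letter list \<Rightarrow> comb" where
  "S_t w = (if w = [] then [(1, [])]
            else map (\<lambda>(c, v). (c, v @ [last w])) (sigma_t (butlast w)))"

text \<open>Reading off indices of a word z_{k_1}...z_{k_n} (z_k = x^{k-1} y).\<close>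
fun word_idx :: "letter list \<Rightarrow> nat \<Rightarrow> nat list" where
  "word_idx [] c = []"
| "word_idx (X # w) c = word_idx w (Suc c)"
| "word_idx (Y # w) c = Suc c # word_idx w 0"

text \<open>Z on words of h^0 (value 0 on words outside h^0, which never occur below).\<close>
definition Z_word :: "letter list \<Rightarrow> real" where
  "Z_word w = (if w = [] then 1
               else if hd w = X \<and> last w = Y then mzv (word_idx w 0) else 0)"

definition Z_comb :: "comb \<Rightarrow> real poly" where
  "Z_comb a = (\<Sum>(c, w) \<leftarrow> a. c * [:Z_word w:])"

definition Zt_comb :: "comb \<Rightarrow> real poly" where
  "Zt_comb a = (\<Sum>(c, w) \<leftarrow> a. c * Z_comb (S_t w))"

text \<open>The element x^{a_1-1}(-tx+y) ... x^{a_{j-1}-1}(-tx+y) x^{a_j-1} y.\<close>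
definition mty :: comb where
  "mty = [(- [:0, 1:], [X]), (1, [Y])]"

fun elt :: "nat list \<Rightarrow> comb" where
  "elt [] = [(1, [])]"
| "elt [a] = [(1, replicate (a - 1) X @ [Y])]"
| "elt (a # b # rest) = cmul (cmul [(1, replicate (a - 1) X)] mty) (elt (b # rest))"

definition comps :: "nat \<Rightarrow> nat \<Rightarrow> nat list set" where
  "comps j n = {ks. length ks = j \<and> sum_list ks = n \<and> (\<forall>i\<in>set ks. 1 \<le> i)}"

definition geom :: "nat \<Rightarrow> real poly" where
  "geom l = (\<Sum>i<l. monom 1 i)"

end

theory Submission
  imports Defs "HOL-Computational_Algebra.Formal_Laurent_Series" "HOL-Real_Asymp.Real_Asymp"
begin

text \<open>
  Truncate all sums at N. For fixed k, the generating function sum_l R_N(k, l) X^l of the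
  truncated right-hand side satisfies a recursion in N (split off the terms whose largest
  summation variable is N). The rational function
  sum_{n = 1..N} X / (n - t X) * E_{n-1}(X) * C_{N,n}(X) / n^k satisfies the same recursion, where
  E_n(X) = prod_{m = 1..n} (m + (1 - t) X) / (m - t X) generates the truncated values
  zeta^t_n({1}^r) and C_{N,n}(X) = prod_{i < n} (N - i) / (N - i - X); so the two agree.
  Since C_{N,n} = 1 + O(X) with coefficients of size O(n / (N - n)), the coefficient of X^l is the
  truncated zeta^t(k + 1, {1}^(l-1)) plus an error of order (log N)^(2l+1) / N. Letting N tend to
  infinity proves the identity for 0 <= t <= 1, hence as polynomials in t, and t = 1 gives the
  zeta-star version. The Z^t form holds because sigma_t(-t x + y) = y.
\<close>

section \<open>Truncated multiple zeta values\<close>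

fun mzv_trunc :: "nat \<Rightarrow> nat list \<Rightarrow> real" where
  "mzv_trunc N [] = 1"
| "mzv_trunc N (k # ks) = (\<Sum>n = 1..N. mzv_trunc (n - 1) ks / real n ^ k)"

fun mzv_star_trunc :: "nat \<Rightarrow> nat list \<Rightarrow> real" where
  "mzv_star_trunc N [] = 1"
| "mzv_star_trunc N (k # ks) = (\<Sum>n = 1..N. mzv_star_trunc n ks / real n ^ k)"

definition zeta_t_trunc :: "real \<Rightarrow> nat \<Rightarrow> nat list \<Rightarrow> real" where
  "zeta_t_trunc t N ks = (\<Sum>(p, c) \<leftarrow> merges ks. t ^ c * mzv_trunc N p)"

lemma mzv_trunc_nonneg: "0 \<le> mzv_trunc N ks"
  by (induction ks arbitrary: N) (auto intro!: sum_nonneg)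

lemma mzv_trunc_0: "ks \<noteq> [] \<Longrightarrow> mzv_trunc 0 ks = 0"
  by (cases ks) auto

lemma mzv_trunc_Suc:
  "mzv_trunc (Suc N) (k # ks) = mzv_trunc N (k # ks) + mzv_trunc N ks / real (Suc N) ^ k"
  by simp

lemma mzv_trunc_merge_head:
  "mzv_trunc N ((k + a) # r) =
     (\<Sum>n = 1..N. (mzv_trunc n (a # r) - mzv_trunc (n - 1) (a # r)) / real n ^ k)"
  unfolding mzv_trunc.simps(2)[of N]
proof (intro sum.cong refl)
  fix n assume "n \<in> {1..N}"
  then obtain m where "n = Suc m" by (cases n) auto
  then show "mzv_trunc (n - 1) r / real n ^ (k + a) =
      (mzv_trunc n (a # r) - mzv_trunc (n - 1) (a # r)) / real n ^ k"
    by (simp add: mzv_trunc_Suc power_add del: mzv_trunc.simps)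
qed

lemma merges_Cons:
  "(p, c) \<in> set (merges (k # ks)) \<Longrightarrow>
     \<exists>a r. p = a # r \<and> k \<le> a \<and> (\<forall>x\<in>set r. \<exists>y\<in>set ks. y \<le> x)"
proof (induction ks arbitrary: k p c)
  case (Cons k' ks)
  from Cons.prems obtain q c' where
    q: "(q, c') \<in> set (merges (k' # ks))" and "p = k # q \<or> p = (k + hd q) # tl q"
    by auto
  moreover obtain a r where "q = a # r" "k' \<le> a" "\<forall>x\<in>set r. \<exists>y\<in>set ks. y \<le> x"
    using Cons.IH[OF q] by blast
  ultimately show ?case by force
qed simp

lemma sum_list_sum_swap: "(\<Sum>x \<leftarrow> xs. \<Sum>n\<in>A. f x n) = (\<Sum>n\<in>A. \<Sum>x \<leftarrow> xs. f x n)"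
  by (induction xs) (auto simp: sum.distrib)

lemma sum_list_divide_const: "(\<Sum>x \<leftarrow> xs. f x / (d :: 'a :: field)) = (\<Sum>x \<leftarrow> xs. f x) / d"
  by (induction xs) (simp_all add: add_divide_distrib)

lemma zeta_t_trunc_Nil [simp]: "zeta_t_trunc t N [] = 1"
  by (simp add: zeta_t_trunc_def)

lemma zeta_t_trunc_Cons:
  "zeta_t_trunc t N (k # ks) =
     (\<Sum>n = 1..N. ((1 - t) * zeta_t_trunc t (n - 1) ks + t * zeta_t_trunc t n ks) / real n ^ k)"
proof (cases ks)
  case Nil
  then show ?thesis by (simp add: zeta_t_trunc_def algebra_simps)
next
  case (Cons k' ks')
  define M where "M = merges ks"
  define step where
    "step n q c = ((1 - t) * (t ^ c * mzv_trunc (n - 1) q) + t * (t ^ c * mzv_trunc n q)) / real n ^ k"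
    for n q c
  \<comment> \<open>The comma after k is kept or replaced by a plus; the two choices telescope into one step.\<close>
  have split: "t ^ c * mzv_trunc N (k # q) + t ^ Suc c * mzv_trunc N ((k + hd q) # tl q) =
      (\<Sum>n = 1..N. step n q c)" if qc: "(q, c) \<in> set M" for q c
  proof -
    obtain a r where q: "q = a # r"
      using merges_Cons[of q c k' ks'] qc unfolding M_def Cons by blast
    show ?thesis
      unfolding q list.sel mzv_trunc_merge_head mzv_trunc.simps(2)[of N k] step_def
        sum_distrib_left sum.distrib[symmetric]
      by (intro sum.cong refl) (simp add: field_simps del: mzv_trunc.simps)
  qed
  have "zeta_t_trunc t N (k # ks) =
      (\<Sum>(q, c) \<leftarrow> M. t ^ c * mzv_trunc N (k # q) + t ^ Suc c * mzv_trunc N ((k + hd q) # tl q))"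
    by (simp add: zeta_t_trunc_def Cons M_def sum_list_addf o_def split_def del: mzv_trunc.simps)
  also have "\<dots> = (\<Sum>(q, c) \<leftarrow> M. \<Sum>n = 1..N. step n q c)"
    using split by (intro arg_cong[where f = sum_list] map_cong) auto
  also have "\<dots> = (\<Sum>n = 1..N. \<Sum>(q, c) \<leftarrow> M. step n q c)"
    by (simp add: split_def sum_list_sum_swap)
  also have "\<dots> = (\<Sum>n = 1..N. ((1 - t) * zeta_t_trunc t (n - 1) ks + t * zeta_t_trunc t n ks) / real n ^ k)"
    unfolding step_def zeta_t_trunc_def M_def split_def
    by (simp add: sum_list_divide_const sum_list_addf sum_list_const_mult del: mzv_trunc.simps)
  finally show ?thesis .
qed

lemma zeta_t_trunc_1: "zeta_t_trunc 1 N ks = mzv_star_trunc N ks"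
  by (induction ks arbitrary: N) (simp_all add: zeta_t_trunc_Cons)

definition trunc_chains :: "(nat \<Rightarrow> nat \<Rightarrow> bool) \<Rightarrow> nat \<Rightarrow> nat \<Rightarrow> nat list set" where
  "trunc_chains R d N = {ms. length ms = d \<and> sorted_wrt R ms \<and> set ms \<subseteq> {1..N}}"

definition mzv_summand :: "nat list \<Rightarrow> nat list \<Rightarrow> real" where
  "mzv_summand ks ms = (\<Prod>i<length ks. 1 / (real (ms ! i)) ^ (ks ! i))"

lemma mzv_summand_Cons: "mzv_summand (k # ks) (n # ms) = mzv_summand ks ms / real n ^ k"
  unfolding mzv_summand_def length_Cons prod.lessThan_Suc_shift by simp

lemma mzv_summand_nonneg: "0 \<le> mzv_summand ks ms"
  by (simp add: mzv_summand_def prod_nonneg)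

lemma finite_trunc_chains: "finite (trunc_chains R d N)"
proof (rule finite_subset)
  show "trunc_chains R d N \<subseteq> {ms. set ms \<subseteq> {1..N} \<and> length ms = d}"
    by (auto simp: trunc_chains_def)
qed (rule finite_lists_length_eq, simp)

lemma trunc_chains_0 [simp]: "trunc_chains R 0 N = {[]}"
  by (auto simp: trunc_chains_def)

lemma sum_trunc_chains_Suc:
  "(\<Sum>ms\<in>trunc_chains R (Suc d) N. f ms) =
     (\<Sum>n = 1..N. \<Sum>ms | ms \<in> trunc_chains R d N \<and> (\<forall>m\<in>set ms. R n m). f (n # ms))"
proof -
  have "trunc_chains R (Suc d) N =
      (\<lambda>(n, ms). n # ms) ` (SIGMA n:{1..N}. {ms \<in> trunc_chains R d N. \<forall>m\<in>set ms. R n m})"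
    by (auto simp: trunc_chains_def image_iff length_Suc_conv)
  moreover have "inj_on (\<lambda>(n, ms). n # ms) A" for A :: "(nat \<times> nat list) set"
    by (auto simp: inj_on_def)
  ultimately show ?thesis
    by (simp add: sum.reindex sum.Sigma finite_trunc_chains case_prod_unfold)
qed

lemma sum_strict_chains: "(\<Sum>ms\<in>trunc_chains (>) (length ks) N. mzv_summand ks ms) = mzv_trunc N ks"
proof (induction ks arbitrary: N)
  case Nil
  then show ?case by (simp add: mzv_summand_def)
next
  case (Cons k ks)
  have "{ms \<in> trunc_chains (>) (length ks) N. \<forall>m\<in>set ms. n > m} = trunc_chains (>) (length ks) (n - 1)"
    if "n \<le> N" for n
    using that by (auto simp: trunc_chains_def subset_iff)
  then show ?case
    by (simp add: sum_trunc_chains_Suc mzv_summand_Cons Cons.IH sum_divide_distrib[symmetric])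
qed

lemma sum_weak_chains:
  "(\<Sum>ms\<in>trunc_chains (\<ge>) (length ks) N. mzv_summand ks ms) = mzv_star_trunc N ks"
proof (induction ks arbitrary: N)
  case Nil
  then show ?case by (simp add: mzv_summand_def)
next
  case (Cons k ks)
  have "{ms \<in> trunc_chains (\<ge>) (length ks) N. \<forall>m\<in>set ms. n \<ge> m} = trunc_chains (\<ge>) (length ks) n"
    if "n \<le> N" for n
    using that by (auto simp: trunc_chains_def subset_iff)
  then show ?case
    by (simp add: sum_trunc_chains_Suc mzv_summand_Cons Cons.IH sum_divide_distrib[symmetric])
qed

lemma tendsto_sum_exhaustion_infsum:
  fixes f :: "'a \<Rightarrow> real"
  assumes nonneg: "\<And>x. x \<in> S \<Longrightarrow> 0 \<le> f x"
    and fin: "\<And>N. finite (A N)" and sub: "\<And>N. A N \<subseteq> S" and inc: "incseq A"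
    and exhaust: "\<And>F. finite F \<Longrightarrow> F \<subseteq> S \<Longrightarrow> \<exists>N. F \<subseteq> A N"
    and bound: "\<And>N. sum f (A N) \<le> B"
  shows "(\<lambda>N. sum f (A N)) \<longlonglongrightarrow> infsum f S"
proof -
  have "sum f F \<le> B" if F: "finite F" "F \<subseteq> S" for F
  proof -
    obtain N where "F \<subseteq> A N" using exhaust[OF F] by blast
    then have "sum f F \<le> sum f (A N)"
      by (intro sum_mono2 fin) (use nonneg sub in blast)+
    then show ?thesis using bound[of N] by linarith
  qed
  then have "f summable_on S"
    by (intro nonneg_bdd_above_summable_on nonneg bdd_aboveI[of _ B]) auto
  then have "(sum f \<longlongrightarrow> infsum f S) (finite_subsets_at_top S)"
    using has_sum_def has_sum_infsum by blast
  moreover have "filterlim A (finite_subsets_at_top S) sequentially"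
    unfolding filterlim_finite_subsets_at_top
  proof (intro allI impI)
    fix F assume F: "finite F \<and> F \<subseteq> S"
    obtain N where "F \<subseteq> A N" using exhaust F by blast
    then show "\<forall>\<^sub>F n in sequentially. finite (A n) \<and> F \<subseteq> A n \<and> A n \<subseteq> S"
      using fin sub incseqD[OF inc] by (intro eventually_sequentiallyI[of N]) blast
  qed
  ultimately show ?thesis
    by (rule filterlim_compose)
qed

lemma tendsto_trunc_chains_infsum:
  fixes f :: "nat list \<Rightarrow> real"
  assumes nonneg: "\<And>ms. 0 \<le> f ms" and bound: "\<And>N. (\<Sum>ms\<in>trunc_chains R d N. f ms) \<le> B"
  shows "(\<lambda>N. \<Sum>ms\<in>trunc_chains R d N. f ms) \<longlonglongrightarrow>
           infsum f {ms. length ms = d \<and> sorted_wrt R ms \<and> (\<forall>m\<in>set ms. 0 < m)}"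
proof (rule tendsto_sum_exhaustion_infsum[OF nonneg finite_trunc_chains _ _ _ bound])
  show "incseq (trunc_chains R d)"
    by (auto simp: incseq_def trunc_chains_def)
  show "trunc_chains R d N \<subseteq> {ms. length ms = d \<and> sorted_wrt R ms \<and> (\<forall>m\<in>set ms. 0 < m)}" for N
    by (auto simp: trunc_chains_def)
  fix F assume F: "finite F" "F \<subseteq> {ms. length ms = d \<and> sorted_wrt R ms \<and> (\<forall>m\<in>set ms. 0 < m)}"
  obtain N where "\<forall>m\<in>(\<Union>ms\<in>F. set ms). m \<le> N"
    using F(1) finite_nat_set_iff_bounded_le by blast
  then have "F \<subseteq> trunc_chains R d N"
    using F(2) by (fastforce simp: trunc_chains_def)
  then show "\<exists>N. F \<subseteq> trunc_chains R d N" ..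
qed

definition admissible :: "nat list \<Rightarrow> bool" where
  "admissible ks \<longleftrightarrow> ks \<noteq> [] \<and> 2 \<le> hd ks \<and> (\<forall>x\<in>set (tl ks). 1 \<le> x)"

lemma admissible_Cons [simp]: "admissible (k # ks) \<longleftrightarrow> 2 \<le> k \<and> (\<forall>x\<in>set ks. 1 \<le> x)"
  by (simp add: admissible_def)

lemma admissible_merges: "admissible ks \<Longrightarrow> (p, c) \<in> set (merges ks) \<Longrightarrow> admissible p"
  unfolding admissible_def using merges_Cons[of p c "hd ks" "tl ks"] by fastforce

lemma sum_triangle_swap:
  "(\<Sum>n = 1..N. \<Sum>m = 1..n - 1. f m n) = (\<Sum>m = 1..N. \<Sum>n = Suc m..N. f m n)"
  by (induction N) (simp_all add: sum.distrib)

lemma sum_inverse_squares_tail: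
  assumes "1 \<le> m"
  shows "(\<Sum>n = Suc m..N. 1 / real n ^ 2) \<le> 1 / real m"
proof -
  have telescope: "(\<Sum>n = Suc m..m + j. 1 / real n ^ 2) \<le> 1 / real m - 1 / real (m + j)" for j
  proof (induction j)
    case (Suc j)
    have "1 / real (Suc (m + j)) ^ 2 \<le> 1 / (real (m + j) * real (Suc (m + j)))"
      using assms by (intro divide_left_mono) (auto simp: power2_eq_square)
    also have "\<dots> = 1 / real (m + j) - 1 / real (Suc (m + j))"
      using assms by (simp add: field_simps)
    finally show ?case using Suc by simp
  qed simp
  show ?thesis
  proof (cases "N \<le> m")
    case False
    then have "(\<Sum>n = Suc m..N. 1 / real n ^ 2) \<le> 1 / real m - 1 / real N"
      using telescope[of "N - m"] by simp
    moreover have "0 \<le> 1 / real N" by simp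
    ultimately show ?thesis by linarith
  qed simp
qed

lemma mzv_trunc_Cons_Cons_le:
  assumes "2 \<le> k" "1 \<le> k'"
  shows "mzv_trunc N (k # k' # ks) \<le> mzv_trunc N (2 # ks)"
proof -
  have "mzv_trunc N (k # k' # ks) \<le>
      (\<Sum>n = 1..N. \<Sum>m = 1..n - 1. mzv_trunc (m - 1) ks / real m * (1 / real n ^ 2))"
    unfolding mzv_trunc.simps sum_divide_distrib
  proof (intro sum_mono)
    fix n m assume n: "n \<in> {1..N}" and m: "m \<in> {1..n - 1}"
    have "real m ^ 1 \<le> real m ^ k'" "real n ^ 2 \<le> real n ^ k"
      using assms m n by (intro power_increasing; simp)+
    then have "mzv_trunc (m - 1) ks / real m ^ k' \<le> mzv_trunc (m - 1) ks / real m"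
      and "1 / real n ^ k \<le> 1 / real n ^ 2"
      using m n mzv_trunc_nonneg[of "m - 1" ks] by (intro divide_left_mono; simp)+
    then have "mzv_trunc (m - 1) ks / real m ^ k' * (1 / real n ^ k) \<le>
        mzv_trunc (m - 1) ks / real m * (1 / real n ^ 2)"
      using mzv_trunc_nonneg[of "m - 1" ks] by (intro mult_mono) simp_all
    then show "mzv_trunc (m - 1) ks / real m ^ k' / real n ^ k \<le>
        mzv_trunc (m - 1) ks / real m * (1 / real n ^ 2)"
      by simp
  qed
  also have "\<dots> = (\<Sum>m = 1..N. mzv_trunc (m - 1) ks / real m * (\<Sum>n = Suc m..N. 1 / real n ^ 2))"
    by (subst sum_triangle_swap) (simp add: sum_distrib_left)
  also have "\<dots> \<le> (\<Sum>m = 1..N. mzv_trunc (m - 1) ks / real m * (1 / real m))"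
    by (intro sum_mono mult_left_mono sum_inverse_squares_tail) (auto simp: mzv_trunc_nonneg)
  also have "\<dots> = mzv_trunc N (2 # ks)"
    by (simp add: power2_eq_square)
  finally show ?thesis .
qed

lemma mzv_trunc_le_2: "admissible ks \<Longrightarrow> mzv_trunc N ks \<le> 2"
proof (induction ks arbitrary: N rule: length_induct)
  case (1 ks)
  then obtain k ks' where ks: "ks = k # ks'" "2 \<le> k" "\<forall>x\<in>set ks'. 1 \<le> x"
    by (cases ks) (auto simp: admissible_def)
  show ?case
  proof (cases ks')
    case Nil
    have "mzv_trunc N [k] \<le> (\<Sum>n = 1..N. 1 / real n ^ 2)"
      using ks(2) by (auto intro!: sum_mono simp: divide_simps power_increasing)
    also have "\<dots> \<le> 1 + (\<Sum>n = Suc 1..N. 1 / real n ^ 2)"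
    proof (cases "N = 0")
      case False
      then show ?thesis by (subst sum.atLeast_Suc_atMost) simp_all
    qed simp
    also have "\<dots> \<le> 2"
      using sum_inverse_squares_tail[of 1 N] by simp
    finally show ?thesis using ks Nil by simp
  next
    case (Cons k' ks'')
    have "mzv_trunc N ks \<le> mzv_trunc N (2 # ks'')"
      using ks Cons by (simp only:) (rule mzv_trunc_Cons_Cons_le; simp)
    also have "\<dots> \<le> 2"
      using ks Cons by (intro "1.IH"[rule_format]) simp_all
    finally show ?thesis .
  qed
qed

lemma tendsto_sum_list:
  fixes f :: "nat \<Rightarrow> 'a \<Rightarrow> 'b :: topological_monoid_add"
  shows "(\<And>x. x \<in> set xs \<Longrightarrow> (\<lambda>N. f N x) \<longlonglongrightarrow> g x) \<Longrightarrow>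
    (\<lambda>N. \<Sum>x \<leftarrow> xs. f N x) \<longlonglongrightarrow> (\<Sum>x \<leftarrow> xs. g x)"
  by (induction xs) (auto intro!: tendsto_add)

lemma mzv_eq_infsum:
  "mzv ks = infsum (mzv_summand ks) {ms. length ms = length ks \<and> sorted_wrt (>) ms \<and> (\<forall>m\<in>set ms. 0 < m)}"
  unfolding mzv_def mzv_summand_def ..

lemma mzv_star_eq_infsum:
  "mzv_star ks = infsum (mzv_summand ks) {ms. length ms = length ks \<and> sorted_wrt (\<ge>) ms \<and> (\<forall>m\<in>set ms. 0 < m)}"
  unfolding mzv_star_def mzv_summand_def ..

lemma mzv_trunc_tendsto:
  assumes "admissible ks"
  shows "(\<lambda>N. mzv_trunc N ks) \<longlonglongrightarrow> mzv ks"
proof -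
  have "(\<lambda>N. \<Sum>ms\<in>trunc_chains (>) (length ks) N. mzv_summand ks ms) \<longlonglongrightarrow> mzv ks"
    unfolding mzv_eq_infsum
    by (rule tendsto_trunc_chains_infsum[OF mzv_summand_nonneg, where B = 2])
      (simp add: sum_strict_chains mzv_trunc_le_2[OF assms])
  then show ?thesis by (simp add: sum_strict_chains)
qed

lemma poly_zeta_t: "poly (zeta_t ks) t = (\<Sum>(p, c) \<leftarrow> merges ks. t ^ c * mzv p)"
proof -
  have "poly (\<Sum>(p, c) \<leftarrow> L. monom (mzv p) c) t = (\<Sum>(p, c) \<leftarrow> L. t ^ c * mzv p)" for L
    by (induction L) (auto simp: poly_monom)
  then show ?thesis unfolding zeta_t_def .
qed

lemma zeta_t_trunc_tendsto:
  "admissible ks \<Longrightarrow> (\<lambda>N. zeta_t_trunc t N ks) \<longlonglongrightarrow> poly (zeta_t ks) t"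
  unfolding zeta_t_trunc_def poly_zeta_t split_def
  by (intro tendsto_sum_list tendsto_mult_left mzv_trunc_tendsto) (auto intro: admissible_merges)

lemma mzv_star_trunc_tendsto:
  assumes "admissible ks"
  shows "(\<lambda>N. mzv_star_trunc N ks) \<longlonglongrightarrow> mzv_star ks"
proof -
  have "mzv_star_trunc N ks \<le> (\<Sum>x \<leftarrow> merges ks. 2)" for N
    unfolding zeta_t_trunc_1[symmetric] zeta_t_trunc_def split_def
    using assms by (intro sum_list_mono) (simp, metis mzv_trunc_le_2 admissible_merges prod.collapse)
  then have "(\<lambda>N. \<Sum>ms\<in>trunc_chains (\<ge>) (length ks) N. mzv_summand ks ms) \<longlonglongrightarrow> mzv_star ks"
    unfolding mzv_star_eq_infsum
    by (intro tendsto_trunc_chains_infsum[OF mzv_summand_nonneg]) (simp add: sum_weak_chains)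
  then show ?thesis by (simp add: sum_weak_chains)
qed

section \<open>Rational functions of the generating variable\<close>

text \<open>With X = v, ones_prod and tail_prod are E_n and C_{N,n} of the proof sketch. gf_alpha and
  gf_delta are the generating functions sum_{b >= 1} X^b / N^b and sum_l [l]_t X^l / N^l of the
  terms by which the truncated right-hand side changes when N - 1 is replaced by N.\<close>

definition ones_prod :: "'a::field_char_0 \<Rightarrow> 'a \<Rightarrow> nat \<Rightarrow> 'a" where
  "ones_prod v t n = (\<Prod>m = 1..n. (of_nat m + (1 - t) * v) / (of_nat m - t * v))"

definition tail_prod :: "'a::field_char_0 \<Rightarrow> nat \<Rightarrow> nat \<Rightarrow> 'a" where
  "tail_prod v N n = (\<Prod>i<n. of_nat (N - i) / (of_nat (N - i) - v))"

definition gf_term :: "'a::field_char_0 \<Rightarrow> 'a \<Rightarrow> nat \<Rightarrow> nat \<Rightarrow> 'a" where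
  "gf_term v t N n = v / (of_nat n - t * v) * ones_prod v t (n - 1) * tail_prod v N n"

definition gf_sum :: "'a::field_char_0 \<Rightarrow> 'a \<Rightarrow> nat \<Rightarrow> nat \<Rightarrow> 'a" where
  "gf_sum v t N k = (\<Sum>n = 1..N. gf_term v t N n / of_nat n ^ k)"

definition gf_alpha :: "'a::field_char_0 \<Rightarrow> nat \<Rightarrow> 'a" where
  "gf_alpha v N = v / (of_nat N - v)"

definition gf_delta :: "'a::field_char_0 \<Rightarrow> 'a \<Rightarrow> nat \<Rightarrow> 'a" where
  "gf_delta v t N = v * of_nat N / ((of_nat N - v) * (of_nat N - t * v))"

lemma ones_prod_0 [simp]: "ones_prod v t 0 = 1"
  by (simp add: ones_prod_def)

lemma ones_prod_Suc:
  "ones_prod v t (Suc n) = ones_prod v t n * ((of_nat (Suc n) + (1 - t) * v) / (of_nat (Suc n) - t * v))"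
  by (simp add: ones_prod_def)

lemma tail_prod_0 [simp]: "tail_prod v N 0 = 1"
  by (simp add: tail_prod_def)

lemma tail_prod_Suc: "tail_prod v N (Suc n) = tail_prod v N n * (of_nat (N - n) / (of_nat (N - n) - v))"
  by (simp add: tail_prod_def)

lemma tail_prod_Suc_Suc:
  "tail_prod v (Suc M) (Suc n) = of_nat (Suc M) / (of_nat (Suc M) - v) * tail_prod v M n"
  unfolding tail_prod_def prod.lessThan_Suc_shift by simp

locale gf_denominators =
  fixes v t :: "'a::field_char_0"
  assumes nat_neq_t_v: "\<And>m. 1 \<le> m \<Longrightarrow> (of_nat m :: 'a) - t * v \<noteq> 0"
    and nat_neq_v: "\<And>m. 1 \<le> m \<Longrightarrow> (of_nat m :: 'a) - v \<noteq> 0"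
begin

lemma gf_term_Suc:
  assumes n: "1 \<le> n" "n \<le> M"
  shows "gf_term v t (Suc M) n =
           gf_term v t M n * (1 - gf_alpha v (Suc M) * of_nat n / (of_nat (Suc M) - of_nat n))"
proof -
  define A :: 'a where "A = of_nat (Suc M - n)"
  define Q :: 'a where "Q = of_nat (Suc M)"
  have A: "A \<noteq> 0" "A - v \<noteq> 0" "A = Q - of_nat n"
    using n nat_neq_v[of "Suc M - n"] unfolding A_def Q_def of_nat_eq_0_iff
    by (simp_all add: of_nat_diff)
  have Q: "Q - v \<noteq> 0"
    unfolding Q_def by (rule nat_neq_v) simp
  have "tail_prod v (Suc M) n * (A / (A - v)) = Q / (Q - v) * tail_prod v M n"
    using tail_prod_Suc[of v "Suc M" n] tail_prod_Suc_Suc[of v M n] by (simp add: A_def Q_def)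
  then have "tail_prod v (Suc M) n = tail_prod v M n * (Q / (Q - v) * ((A - v) / A))"
    using A(1,2) Q by (simp add: field_simps)
  also have "Q / (Q - v) * ((A - v) / A) = 1 - v / (Q - v) * of_nat n / (Q - of_nat n)"
    using A Q unfolding A(3) by (simp add: divide_simps) (simp add: algebra_simps)
  finally show ?thesis
    by (simp add: gf_term_def gf_alpha_def Q_def)
qed

lemma sum_gf_term_telescope:
  assumes "s \<le> M"
  shows "1 / (of_nat (Suc M) - t * v) + (\<Sum>n = 1..s. gf_term v t M n / (of_nat (Suc M) - of_nat n)) =
           ones_prod v t s * tail_prod v M s / (of_nat (Suc M) - t * v)"
  using assms
proof (induction s)
  case (Suc s)
  define G where "G = ones_prod v t s * tail_prod v M s"
  define S :: 'a where "S = of_nat (Suc s)"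
  define D :: 'a where "D = of_nat M - of_nat s"
  have S: "S - t * v \<noteq> 0" "S + D - t * v \<noteq> 0"
    using nat_neq_t_v[of "Suc s"] nat_neq_t_v[of "Suc M"] Suc.prems by (simp_all add: S_def D_def)
  have D: "D \<noteq> 0" "D - v \<noteq> 0"
    using Suc.prems nat_neq_v[of "M - s"] by (simp_all add: D_def of_nat_diff)
  have M: "of_nat (Suc M) = S + D" "of_nat (Suc M) - S = D"
    by (simp_all add: S_def D_def)
  have tail: "tail_prod v M (Suc s) = tail_prod v M s * (D / (D - v))"
    using tail_prod_Suc[of v M s] Suc.prems by (simp add: D_def of_nat_diff)
  have "1 / (of_nat (Suc M) - t * v) + (\<Sum>n = 1..Suc s. gf_term v t M n / (of_nat (Suc M) - of_nat n)) =
      G / (of_nat (Suc M) - t * v) + gf_term v t M (Suc s) / (of_nat (Suc M) - of_nat (Suc s))"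
    using Suc by (simp add: G_def sum.cl_ivl_Suc add.assoc)
  also have "\<dots> = G / (S + D - t * v) + v * G * (D / (D - v)) / ((S - t * v) * D)"
    unfolding M gf_term_def tail G_def S_def by simp
  also have "\<dots> = G * ((S + (1 - t) * v) / (S - t * v)) * (D / (D - v)) / (S + D - t * v)"
    using S D by (simp add: divide_simps) (simp add: algebra_simps)
  also have "\<dots> = ones_prod v t (Suc s) * tail_prod v M (Suc s) / (of_nat (Suc M) - t * v)"
    unfolding ones_prod_Suc tail G_def M(1) S_def by (simp only: ac_simps)
  finally show ?case .
qed simp

lemma gf_term_diagonal:
  "gf_term v t (Suc M) (Suc M) = gf_delta v t (Suc M) + gf_alpha v (Suc M) * of_nat (Suc M) *
      (\<Sum>n = 1..M. gf_term v t M n / (of_nat (Suc M) - of_nat n))"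
proof -
  define P :: 'a where "P = of_nat (Suc M)"
  define G where "G = ones_prod v t M * tail_prod v M M"
  have P: "P - v \<noteq> 0" "P - t * v \<noteq> 0"
    unfolding P_def by (rule nat_neq_v nat_neq_t_v; simp)+
  have sum: "(\<Sum>n = 1..M. gf_term v t M n / (of_nat (Suc M) - of_nat n)) = G / (P - t * v) - 1 / (P - t * v)"
    using sum_gf_term_telescope[of M M] by (simp add: G_def P_def algebra_simps)
  have "gf_term v t (Suc M) (Suc M) = v / (P - t * v) * (P / (P - v) * G)"
    by (simp add: gf_term_def tail_prod_Suc_Suc G_def P_def ac_simps)
  also have "\<dots> = v * P / ((P - v) * (P - t * v)) + v / (P - v) * P * (G / (P - t * v) - 1 / (P - t * v))"
    using P by (simp add: divide_simps) (simp add: algebra_simps)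
  also have "\<dots> = gf_delta v t (Suc M) + gf_alpha v (Suc M) * of_nat (Suc M) *
      (\<Sum>n = 1..M. gf_term v t M n / (of_nat (Suc M) - of_nat n))"
    unfolding sum by (simp add: gf_delta_def gf_alpha_def P_def)
  finally show ?thesis .
qed

end

lemma sum_power_pair:
  fixes x y :: "'a::comm_ring_1"
  shows "(y - x) * (\<Sum>a = 1..j. x ^ a * y ^ (Suc j - a)) = x * y * (y ^ j - x ^ j)"
proof (induction j)
  case (Suc j)
  have "(\<Sum>a = 1..Suc j. x ^ a * y ^ (Suc (Suc j) - a)) = y * (\<Sum>a = 1..j. x ^ a * y ^ (Suc j - a)) + x ^ Suc j * y"
    by (simp add: sum.cl_ivl_Suc sum_distrib_left Suc_diff_le algebra_simps)
  then have "(y - x) * (\<Sum>a = 1..Suc j. x ^ a * y ^ (Suc (Suc j) - a)) =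
      y * ((y - x) * (\<Sum>a = 1..j. x ^ a * y ^ (Suc j - a))) + (y - x) * x ^ Suc j * y"
    by (simp add: algebra_simps)
  also have "\<dots> = y * (x * y * (y ^ j - x ^ j)) + (y - x) * x ^ Suc j * y"
    by (simp only: Suc.IH)
  finally show ?case
    by (simp add: algebra_simps)
qed simp

context gf_denominators
begin

lemma gf_sum_shifted:
  "(\<Sum>a = 1..j. gf_sum v t M (Suc j - a) / of_nat (Suc M) ^ a) =
     (\<Sum>n = 1..M. gf_term v t M n *
        ((1 / of_nat n ^ j - 1 / of_nat (Suc M) ^ j) / (of_nat (Suc M) - of_nat n)))"
proof -
  define N :: 'a where "N = of_nat (Suc M)"
  have pair: "(\<Sum>a = 1..j. x ^ a * y ^ (Suc j - a)) = (y ^ j - x ^ j) / (inverse x - inverse y)"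
    if "x \<noteq> y" "x \<noteq> 0" "y \<noteq> 0" for x y :: 'a
  proof -
    have "inverse x - inverse y = (y - x) / (x * y)"
      using that by (simp add: field_simps)
    then show ?thesis
      using sum_power_pair[of y x j] that by (simp add: field_simps)
  qed
  have geometric: "(\<Sum>a = 1..j. (1 / N) ^ a * (1 / of_nat n) ^ (Suc j - a)) =
      (1 / of_nat n ^ j - 1 / N ^ j) / (N - of_nat n)" if n: "n \<in> {1..M}" for n
  proof -
    have "N \<noteq> 0" "(of_nat n :: 'a) \<noteq> 0" "N - of_nat n \<noteq> 0"
      using n unfolding N_def of_nat_eq_0_iff right_minus_eq of_nat_eq_iff by auto
    then show ?thesis
      using pair[of "1 / N" "1 / of_nat n"] by (simp add: power_one_over)
  qed
  have "(\<Sum>a = 1..j. gf_sum v t M (Suc j - a) / N ^ a) =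
      (\<Sum>a = 1..j. \<Sum>n = 1..M. gf_term v t M n * ((1 / N) ^ a * (1 / of_nat n) ^ (Suc j - a)))"
    unfolding gf_sum_def sum_divide_distrib by (intro sum.cong refl) (simp add: power_one_over field_simps)
  also have "\<dots> = (\<Sum>n = 1..M. gf_term v t M n * (\<Sum>a = 1..j. (1 / N) ^ a * (1 / of_nat n) ^ (Suc j - a)))"
    by (subst sum.swap) (simp add: sum_distrib_left)
  finally have "(\<Sum>a = 1..j. gf_sum v t M (Suc j - a) / N ^ a) =
      (\<Sum>n = 1..M. gf_term v t M n * ((1 / of_nat n ^ j - 1 / N ^ j) / (N - of_nat n)))"
    using geometric by simp
  then show ?thesis by (simp only: N_def)
qed

lemma gf_sum_Suc:
  "gf_sum v t (Suc M) (Suc j) = gf_sum v t M (Suc j) + gf_delta v t (Suc M) / of_nat (Suc M) ^ Suc j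
     - gf_alpha v (Suc M) * (\<Sum>a = 1..j. gf_sum v t M (Suc j - a) / of_nat (Suc M) ^ a)"
proof -
  define N :: 'a where "N = of_nat (Suc M)"
  define \<alpha> where "\<alpha> = gf_alpha v (Suc M)"
  have N: "N \<noteq> 0" unfolding N_def of_nat_eq_0_iff by simp
  have off_diagonal: "gf_term v t (Suc M) n / of_nat n ^ Suc j =
      gf_term v t M n / of_nat n ^ Suc j - \<alpha> * (gf_term v t M n * (1 / of_nat n ^ j) / (N - of_nat n))"
    if n: "n \<in> {1..M}" for n
  proof -
    have nonzero: "N - of_nat n \<noteq> 0" "(of_nat n :: 'a) \<noteq> 0"
      using n unfolding N_def right_minus_eq of_nat_eq_iff of_nat_eq_0_iff by auto
    have step: "gf_term v t (Suc M) n = gf_term v t M n * (1 - \<alpha> * of_nat n / (N - of_nat n))"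
      using gf_term_Suc n unfolding \<alpha>_def N_def by simp
    show ?thesis
      unfolding step using nonzero by (simp add: field_simps)
  qed
  have off_diagonal_sum: "(\<Sum>n = 1..M. gf_term v t (Suc M) n / of_nat n ^ Suc j) =
      (\<Sum>n = 1..M. gf_term v t M n / of_nat n ^ Suc j -
         \<alpha> * (gf_term v t M n * (1 / of_nat n ^ j) / (N - of_nat n)))"
    by (rule sum.cong[OF refl off_diagonal])
  define S where "S = (\<Sum>n = 1..M. gf_term v t M n / (N - of_nat n))"
  have "(\<Sum>n = 1..M. gf_term v t M n * (1 / N ^ j) / (N - of_nat n)) = S / N ^ j"
    unfolding S_def sum_divide_distrib by (intro sum.cong) auto
  moreover have "gf_term v t (Suc M) (Suc M) = gf_delta v t (Suc M) + \<alpha> * N * S"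
    unfolding gf_term_diagonal \<alpha>_def N_def S_def ..
  ultimately have diagonal: "gf_term v t (Suc M) (Suc M) / N ^ Suc j = gf_delta v t (Suc M) / N ^ Suc j +
      \<alpha> * (\<Sum>n = 1..M. gf_term v t M n * (1 / N ^ j) / (N - of_nat n))"
    using N by (simp add: field_simps)
  have "gf_sum v t (Suc M) (Suc j) =
      (\<Sum>n = 1..M. gf_term v t (Suc M) n / of_nat n ^ Suc j) + gf_term v t (Suc M) (Suc M) / N ^ Suc j"
    by (simp add: gf_sum_def N_def sum.cl_ivl_Suc del: of_nat_Suc)
  also have "\<dots> = gf_sum v t M (Suc j) + gf_delta v t (Suc M) / N ^ Suc j
      - \<alpha> * ((\<Sum>n = 1..M. gf_term v t M n * (1 / of_nat n ^ j) / (N - of_nat n))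
                - (\<Sum>n = 1..M. gf_term v t M n * (1 / N ^ j) / (N - of_nat n)))"
    unfolding diagonal off_diagonal_sum gf_sum_def sum_subtractf sum_distrib_left[symmetric]
    by (simp add: algebra_simps)
  also have "(\<Sum>n = 1..M. gf_term v t M n * (1 / of_nat n ^ j) / (N - of_nat n))
                - (\<Sum>n = 1..M. gf_term v t M n * (1 / N ^ j) / (N - of_nat n)) =
      (\<Sum>n = 1..M. gf_term v t M n * ((1 / of_nat n ^ j - 1 / N ^ j) / (N - of_nat n)))"
    by (simp add: diff_divide_distrib right_diff_distrib sum_subtractf)
  finally show ?thesis
    unfolding gf_sum_shifted by (simp only: \<alpha>_def N_def)
qed

end

section \<open>The truncated right-hand side\<close>

lemma poly_geom: "poly (geom l) t = (\<Sum>i<l. t ^ i)"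
  by (simp add: geom_def poly_sum poly_monom)

lemma finite_comps: "finite (comps j k)"
proof (rule finite_subset)
  show "comps j k \<subseteq> {xs. set xs \<subseteq> {..k} \<and> length xs = j}"
    by (auto simp: comps_def intro: member_le_sum_list)
qed (rule finite_lists_length_eq, simp)

lemma comps_eq_empty: "k < j \<Longrightarrow> comps j k = {}"
proof -
  have "j \<le> k" if "xs \<in> comps j k" for xs
    using that sum_list_mono[of xs "\<lambda>_. 1" "\<lambda>x. x"] by (auto simp: comps_def sum_list_triv)
  then show "k < j \<Longrightarrow> comps j k = {}" by fastforce
qed

lemma comps_1: "1 \<le> k \<Longrightarrow> comps 1 k = {[k]}"
  by (auto simp: comps_def length_Suc_conv)

lemma sum_comps_Suc:
  "(\<Sum>xs\<in>comps (Suc j) k. g xs) = (\<Sum>a = 1..k. \<Sum>xs\<in>comps j (k - a). g (a # xs))"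
proof -
  have "comps (Suc j) k = (\<lambda>(a, xs). a # xs) ` (SIGMA a:{1..k}. comps j (k - a))"
    by (auto simp: comps_def image_iff length_Suc_conv)
  moreover have "inj_on (\<lambda>(a, xs). a # xs) A" for A :: "(nat \<times> nat list) set"
    by (auto simp: inj_on_def)
  ultimately show ?thesis
    by (simp add: sum.reindex sum.Sigma finite_comps case_prod_unfold)
qed

lemma admissible_map2_comps:
  assumes "ks \<in> comps j k" "ls \<in> comps j l" "1 \<le> j"
  shows "admissible (map2 (+) ks ls)"
proof -
  obtain a ks' b ls' where "ks = a # ks'" "ls = b # ls'"
    using assms by (cases ks; cases ls) (auto simp: comps_def)
  then show ?thesis
    using assms by (auto simp: comps_def dest!: set_zip_leftD)
qed

definition comp_sum :: "real \<Rightarrow> nat \<Rightarrow> nat \<Rightarrow> nat \<Rightarrow> nat \<Rightarrow> real" where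
  "comp_sum t N j k l =
     (\<Sum>ks\<in>comps j k. \<Sum>ls\<in>comps j l. poly (geom (last ls)) t * mzv_trunc N (map2 (+) ks ls))"

definition rhs_trunc :: "real \<Rightarrow> nat \<Rightarrow> nat \<Rightarrow> nat \<Rightarrow> real" where
  "rhs_trunc t N k l = (\<Sum>j = 1..k. (-1) ^ (j - 1) * comp_sum t N j k l)"

lemma rhs_trunc_eq_sum_upto:
  "k \<le> K \<Longrightarrow> rhs_trunc t N k l = (\<Sum>j = 1..K. (-1) ^ (j - 1) * comp_sum t N j k l)"
  unfolding rhs_trunc_def by (rule sum.mono_neutral_left) (auto simp: comp_sum_def comps_eq_empty)

lemma rhs_trunc_0_left: "rhs_trunc t N 0 l = 0"
  by (simp add: rhs_trunc_def)

lemma rhs_trunc_0_right: "rhs_trunc t 0 k l = 0"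
proof -
  have "mzv_trunc 0 (map2 (+) ks ls) = 0" if "ks \<in> comps j k" "ls \<in> comps j l" "1 \<le> j" for j ks ls
    using admissible_map2_comps[OF that] by (intro mzv_trunc_0) (auto simp: admissible_def)
  then show ?thesis
    by (simp add: rhs_trunc_def comp_sum_def)
qed

definition comp_sum_step :: "real \<Rightarrow> nat \<Rightarrow> nat \<Rightarrow> nat \<Rightarrow> nat \<Rightarrow> real" where
  "comp_sum_step t M j k l =
     (\<Sum>ks\<in>comps j k. \<Sum>ls\<in>comps j l. poly (geom (last ls)) t *
        mzv_trunc M (map2 (+) (tl ks) (tl ls)) / real (Suc M) ^ (hd ks + hd ls))"

lemma comp_sum_Suc:
  assumes "1 \<le> j"
  shows "comp_sum t (Suc M) j k l = comp_sum t M j k l + comp_sum_step t M j k l"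
  unfolding comp_sum_def comp_sum_step_def sum.distrib[symmetric]
proof (intro sum.cong refl)
  fix ks ls assume "ks \<in> comps j k" "ls \<in> comps j l"
  then obtain a ks' b ls' where "ks = a # ks'" "ls = b # ls'"
    using assms by (cases ks; cases ls) (auto simp: comps_def)
  then show "poly (geom (last ls)) t * mzv_trunc (Suc M) (map2 (+) ks ls) =
      poly (geom (last ls)) t * mzv_trunc M (map2 (+) ks ls) +
      poly (geom (last ls)) t * mzv_trunc M (map2 (+) (tl ks) (tl ls)) / real (Suc M) ^ (hd ks + hd ls)"
    by (simp only: list.map zip_Cons_Cons prod.case mzv_trunc_Suc list.sel) (simp add: algebra_simps)
qed

lemma comp_sum_step_1:
  assumes "1 \<le> k"
  shows "comp_sum_step t M 1 k l = poly (geom l) t / real (Suc M) ^ (k + l)"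
proof (cases "l = 0")
  case True
  then show ?thesis by (simp add: comp_sum_step_def comps_eq_empty geom_def)
next
  case False
  then have "comps 1 l = {[l]}" by (intro comps_1) simp
  then show ?thesis unfolding comp_sum_step_def comps_1[OF assms] by simp
qed

lemma comp_sum_step_Suc:
  assumes "1 \<le> j"
  shows "comp_sum_step t M (Suc j) k l =
           (\<Sum>a = 1..k. \<Sum>b = 1..l. comp_sum t M j (k - a) (l - b) / real (Suc M) ^ (a + b))"
proof -
  have "last (b # ls) = last ls" if "ls \<in> comps j (l - b)" for b ls
    using that assms by (auto simp: comps_def)
  then have "comp_sum_step t M (Suc j) k l =
      (\<Sum>a = 1..k. \<Sum>ks\<in>comps j (k - a). \<Sum>b = 1..l. \<Sum>ls\<in>comps j (l - b).
         poly (geom (last ls)) t * mzv_trunc M (map2 (+) ks ls) / real (Suc M) ^ (a + b))"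
    unfolding comp_sum_step_def sum_comps_Suc list.sel by (intro sum.cong refl) simp
  also have "\<dots> = (\<Sum>a = 1..k. \<Sum>b = 1..l. comp_sum t M j (k - a) (l - b) / real (Suc M) ^ (a + b))"
    unfolding comp_sum_def sum_divide_distrib by (intro sum.cong refl) (subst sum.swap, rule refl)
  finally show ?thesis .
qed

lemma alternating_sum_comp_sum_step:
  assumes "1 \<le> k"
  shows "(\<Sum>j = 1..k. (-1) ^ (j - 1) * comp_sum_step t M j k l) = poly (geom l) t / real (Suc M) ^ (k + l)
           - (\<Sum>a = 1..k. \<Sum>b = 1..l. rhs_trunc t M (k - a) (l - b) / real (Suc M) ^ (a + b))"
proof -
  let ?step = "\<lambda>j. comp_sum_step t M j k l"
  have "(\<Sum>j = 1..k. (-1) ^ (j - 1) * ?step j) = ?step 1 + (\<Sum>j = 1..k - 1. (-1) ^ j * ?step (Suc j))"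
  proof -
    obtain k' where "k = Suc k'" using assms by (cases k) auto
    then show ?thesis
      by (subst sum.atLeast_Suc_atMost) (simp_all add: sum.shift_bounds_cl_Suc_ivl del: sum.cl_ivl_Suc)
  qed
  also have "(\<Sum>j = 1..k - 1. (-1) ^ j * ?step (Suc j)) =
      (\<Sum>j = 1..k - 1. \<Sum>a = 1..k. \<Sum>b = 1..l.
         - ((-1) ^ (j - 1) * comp_sum t M j (k - a) (l - b) / real (Suc M) ^ (a + b)))"
  proof (intro sum.cong refl)
    fix j assume "j \<in> {1..k - 1}"
    then obtain i where "j = Suc i" by (cases j) auto
    then show "(-1) ^ j * ?step (Suc j) = (\<Sum>a = 1..k. \<Sum>b = 1..l.
        - ((-1) ^ (j - 1) * comp_sum t M j (k - a) (l - b) / real (Suc M) ^ (a + b)))"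
      by (simp add: comp_sum_step_Suc sum_distrib_left sum_negf)
  qed
  also have "\<dots> = (\<Sum>a = 1..k. \<Sum>b = 1..l. \<Sum>j = 1..k - 1.
         - ((-1) ^ (j - 1) * comp_sum t M j (k - a) (l - b) / real (Suc M) ^ (a + b)))"
    by (subst sum.swap) (intro sum.cong refl sum.swap)
  also have "\<dots> = - (\<Sum>a = 1..k. \<Sum>b = 1..l.
         (\<Sum>j = 1..k - 1. (-1) ^ (j - 1) * comp_sum t M j (k - a) (l - b)) / real (Suc M) ^ (a + b))"
    by (simp add: sum_negf sum_divide_distrib)
  also have "\<dots> = - (\<Sum>a = 1..k. \<Sum>b = 1..l. rhs_trunc t M (k - a) (l - b) / real (Suc M) ^ (a + b))"
  proof (intro arg_cong[where f = uminus] sum.cong refl)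
    fix a b assume "a \<in> {1..k}"
    then show "(\<Sum>j = 1..k - 1. (-1) ^ (j - 1) * comp_sum t M j (k - a) (l - b)) / real (Suc M) ^ (a + b) =
        rhs_trunc t M (k - a) (l - b) / real (Suc M) ^ (a + b)"
      by (subst rhs_trunc_eq_sum_upto[where K = "k - 1"]) auto
  qed
  finally show ?thesis
    using comp_sum_step_1[OF assms] by simp
qed

lemma rhs_trunc_Suc:
  assumes "1 \<le> k"
  shows "rhs_trunc t (Suc M) k l = rhs_trunc t M k l + poly (geom l) t / real (Suc M) ^ (k + l)
           - (\<Sum>a = 1..k. \<Sum>b = 1..l. rhs_trunc t M (k - a) (l - b) / real (Suc M) ^ (a + b))"
proof -
  have "rhs_trunc t (Suc M) k l = rhs_trunc t M k l + (\<Sum>j = 1..k. (-1) ^ (j - 1) * comp_sum_step t M j k l)"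
    unfolding rhs_trunc_def sum.distrib[symmetric]
    by (intro sum.cong refl) (simp add: comp_sum_Suc algebra_simps)
  then show ?thesis
    using alternating_sum_comp_sum_step[OF assms] by simp
qed

section \<open>Realisation by formal power series\<close>

lemma fls_nat_minus_X_neq_0:
  assumes "1 \<le> m"
  shows "(of_nat m :: real fls) - fls_const c * fls_X \<noteq> 0"
proof -
  have "(of_nat m - fps_const c * fps_X :: real fps) $ 0 \<noteq> 0"
    using assms by (simp add: fps_of_nat)
  then have "fps_to_fls (of_nat m - fps_const c * fps_X :: real fps) \<noteq> 0"
    by (intro fps_to_fls_nonzeroI) (metis fps_zero_nth)
  then show ?thesis
    by (simp add: fls_times_fps_to_fls fps_to_fls_of_nat)
qed

interpretation fls: gf_denominators "fls_X :: real fls" "fls_const t" for t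
proof
  show "of_nat m - fls_const t * fls_X \<noteq> (0 :: real fls)" if "1 \<le> m" for m
    using that by (rule fls_nat_minus_X_neq_0)
  show "of_nat m - fls_X \<noteq> (0 :: real fls)" if "1 \<le> m" for m
    using fls_nat_minus_X_neq_0[OF that, of 1] by simp
qed

lemma fps_to_fls_sum: "fps_to_fls (sum f A) = (\<Sum>x\<in>A. fps_to_fls (f x))"
  by (induction A rule: infinite_finite_induct) auto

lemma fls_const_one_over_nat_power: "fls_const (1 / real n ^ k) = (1 / of_nat n ^ k :: real fls)"
  by (simp add: fls_const_divide_const[symmetric] fls_of_nat fls_const_power)

definition ones_trunc :: "real \<Rightarrow> nat \<Rightarrow> nat \<Rightarrow> real" where
  "ones_trunc t n r = zeta_t_trunc t n (replicate r 1)"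

lemma ones_trunc_0 [simp]: "ones_trunc t n 0 = 1"
  by (simp add: ones_trunc_def)

lemma ones_trunc_Suc:
  "ones_trunc t n (Suc r) = (\<Sum>m = 1..n. ((1 - t) * ones_trunc t (m - 1) r + t * ones_trunc t m r) / real m)"
  by (simp add: ones_trunc_def zeta_t_trunc_Cons)

definition ones_fps :: "real \<Rightarrow> nat \<Rightarrow> real fps" where
  "ones_fps t n = Abs_fps (ones_trunc t n)"

lemma ones_fps_0: "ones_fps t 0 = 1"
proof (rule fps_ext)
  show "ones_fps t 0 $ r = 1 $ r" for r
    by (cases r) (simp_all add: ones_fps_def ones_trunc_Suc)
qed

lemma ones_fps_Suc:
  "ones_fps t (Suc n) * (of_nat (Suc n) - fps_const t * fps_X) =
     ones_fps t n * (of_nat (Suc n) + fps_const (1 - t) * fps_X)"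
proof (rule fps_ext)
  fix r
  show "(ones_fps t (Suc n) * (of_nat (Suc n) - fps_const t * fps_X)) $ r =
      (ones_fps t n * (of_nat (Suc n) + fps_const (1 - t) * fps_X)) $ r"
  proof (cases r)
    case (Suc r')
    have "ones_trunc t (Suc n) (Suc r') * real (Suc n) - t * ones_trunc t (Suc n) r' =
        ones_trunc t n (Suc r') * real (Suc n) + (1 - t) * ones_trunc t n r'"
      by (simp add: ones_trunc_Suc field_simps)
    then show ?thesis
      by (simp add: Suc ones_fps_def fps_of_nat algebra_simps)
  qed (simp add: ones_fps_def fps_of_nat)
qed

lemma fps_to_fls_ones_fps: "fps_to_fls (ones_fps t n) = ones_prod fls_X (fls_const t) n"
proof (induction n)
  case (Suc n)
  have "fps_to_fls (ones_fps t (Suc n)) * (of_nat (Suc n) - fls_const t * fls_X) =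
      fps_to_fls (ones_fps t n) * (of_nat (Suc n) + (1 - fls_const t) * fls_X)"
    using arg_cong[OF ones_fps_Suc[of t n], of fps_to_fls]
    by (simp add: fls_times_fps_to_fls fps_to_fls_of_nat fls_minus_const[of 1 t, symmetric] del: of_nat_Suc)
  moreover have "(of_nat (Suc n) :: real fls) - fls_const t * fls_X \<noteq> 0"
    by (rule fls_nat_minus_X_neq_0) simp
  ultimately show ?case
    by (simp add: Suc.IH ones_prod_Suc field_simps del: of_nat_Suc)
qed (simp add: ones_fps_0)

definition head_fps :: "real \<Rightarrow> nat \<Rightarrow> real fps" where
  "head_fps t n = fps_const (1 / real n) *
     (fps_X * (fps_const (1 - t) * ones_fps t (n - 1) + fps_const t * ones_fps t n))"

lemma head_fps_nth:
  "head_fps t n $ l =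
     (if l = 0 then 0 else ((1 - t) * ones_trunc t (n - 1) (l - 1) + t * ones_trunc t n (l - 1)) / real n)"
  by (simp add: head_fps_def ones_fps_def)

lemma fps_to_fls_head_fps:
  assumes "1 \<le> n"
  shows "fps_to_fls (head_fps t n) =
           fls_X / (of_nat n - fls_const t * fls_X) * ones_prod fls_X (fls_const t) (n - 1)"
proof -
  obtain m where n: "n = Suc m" using assms by (cases n) auto
  define P :: "real fls" where "P = of_nat n"
  define E where "E = ones_prod fls_X (fls_const t) m"
  have P: "P \<noteq> 0" "P - fls_const t * fls_X \<noteq> 0"
    using fls_nat_minus_X_neq_0[OF assms] assms unfolding P_def of_nat_eq_0_iff by auto
  have "fps_to_fls (head_fps t n) = 1 / P * (fls_X * ((1 - fls_const t) * E
      + fls_const t * (E * ((P + (1 - fls_const t) * fls_X) / (P - fls_const t * fls_X)))))"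
    unfolding head_fps_def fls_times_fps_to_fls
    by (simp add: fps_to_fls_ones_fps n ones_prod_Suc fls_times_fps_to_fls E_def P_def
        fls_const_one_over_nat_power[of _ 1, unfolded power_one_right] fls_minus_const[of 1 t, symmetric]
        del: of_nat_Suc)
  also have "\<dots> = fls_X / (P - fls_const t * fls_X) * E"
    using P by (simp add: divide_simps) (simp add: algebra_simps)
  finally show ?thesis by (simp add: P_def E_def n)
qed

definition geo_fps :: "real \<Rightarrow> real fps" where
  "geo_fps c = Abs_fps (\<lambda>i. c ^ i)"

lemma geo_fps_nth [simp]: "geo_fps c $ i = c ^ i"
  by (simp add: geo_fps_def)

lemma fps_to_fls_geo_fps: "fps_to_fls (geo_fps c) = 1 / (1 - fls_const c * fls_X)"
proof -
  have "geo_fps c * (1 - fps_const c * fps_X) = 1"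
  proof (rule fps_ext)
    show "(geo_fps c * (1 - fps_const c * fps_X)) $ r = 1 $ r" for r
      by (cases r) (simp_all add: algebra_simps)
  qed
  from arg_cong[OF this, of fps_to_fls]
  have "fps_to_fls (geo_fps c) * (1 - fls_const c * fls_X) = 1"
    by (simp add: fls_times_fps_to_fls)
  moreover from this have "1 - fls_const c * fls_X \<noteq> (0 :: real fls)"
    by auto
  ultimately show ?thesis
    by (simp add: eq_divide_eq)
qed

definition tail_fps :: "nat \<Rightarrow> nat \<Rightarrow> real fps" where
  "tail_fps N n = (\<Prod>i<n. geo_fps (1 / real (N - i)))"

lemma fps_to_fls_tail_fps: "n \<le> N \<Longrightarrow> fps_to_fls (tail_fps N n) = tail_prod fls_X N n"
proof (induction n)
  case (Suc n)
  define A :: "real fls" where "A = of_nat (N - n)"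
  have A: "A \<noteq> 0" "A - fls_X \<noteq> 0"
    using Suc.prems fls.nat_neq_v[of "N - n"] unfolding A_def of_nat_eq_0_iff by auto
  have "fps_to_fls (tail_fps N (Suc n)) = fps_to_fls (tail_fps N n) * fps_to_fls (geo_fps (1 / real (N - n)))"
    by (simp add: tail_fps_def fls_times_fps_to_fls)
  also have "\<dots> = tail_prod fls_X N n * (1 / (1 - 1 / A * fls_X))"
    unfolding fps_to_fls_geo_fps fls_const_one_over_nat_power[of _ 1, unfolded power_one_right] A_def
    using Suc by simp
  also have "1 / (1 - 1 / A * fls_X) = A / (A - fls_X)"
    using A by (simp add: divide_simps)
  finally show ?case
    by (simp add: tail_prod_Suc A_def)
qed (simp add: tail_fps_def)

lemma gf_sum_eq_fps:
  "gf_sum fls_X (fls_const t) N k =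
     fps_to_fls (\<Sum>n = 1..N. fps_const (1 / real n ^ k) * (head_fps t n * tail_fps N n))"
  unfolding gf_sum_def fps_to_fls_sum
proof (rule sum.cong[OF refl])
  fix n assume "n \<in> {1..N}"
  then show "gf_term fls_X (fls_const t) N n / of_nat n ^ k =
      fps_to_fls (fps_const (1 / real n ^ k) * (head_fps t n * tail_fps N n))"
    by (simp add: fls_times_fps_to_fls fps_to_fls_head_fps fps_to_fls_tail_fps
        fls_const_one_over_nat_power gf_term_def)
qed

definition alpha_fps :: "nat \<Rightarrow> real fps" where
  "alpha_fps N = fps_X * (fps_const (1 / real N) * geo_fps (1 / real N))"

definition delta_fps :: "real \<Rightarrow> nat \<Rightarrow> real fps" where
  "delta_fps t N = alpha_fps N * geo_fps (t / real N)"

lemma alpha_fps_nth: "alpha_fps N $ l = (if l = 0 then 0 else 1 / real N ^ l)"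
  by (cases l) (simp_all add: alpha_fps_def power_one_over)

lemma delta_fps_nth: "delta_fps t N $ l = poly (geom l) t / real N ^ l"
proof -
  have "delta_fps t N $ l = (\<Sum>i = 1..l. 1 / real N ^ i * (t / real N) ^ (l - i))"
    unfolding delta_fps_def fps_mult_nth alpha_fps_nth
    by (rule sum.mono_neutral_cong_right) auto
  also have "\<dots> = (\<Sum>i = 1..l. t ^ (l - i) / real N ^ l)"
  proof (rule sum.cong[OF refl])
    fix i assume "i \<in> {1..l}"
    then have "real N ^ l = real N ^ i * real N ^ (l - i)"
      by (simp flip: power_add)
    then show "1 / real N ^ i * (t / real N) ^ (l - i) = t ^ (l - i) / real N ^ l"
      by (simp add: power_divide)
  qed
  also have "\<dots> = poly (geom l) t / real N ^ l"
    unfolding poly_geom sum_divide_distrib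
    by (simp add: sum.atLeast1_atMost_eq sum.nat_diff_reindex[where g = "\<lambda>i. t ^ i / real N ^ l"])
  finally show ?thesis .
qed

lemma fps_to_fls_alpha_fps: "1 \<le> N \<Longrightarrow> fps_to_fls (alpha_fps N) = gf_alpha fls_X N"
  using fls.nat_neq_v[of N]
  by (simp add: alpha_fps_def gf_alpha_def fls_times_fps_to_fls fps_to_fls_geo_fps
      fls_const_one_over_nat_power[of _ 1, unfolded power_one_right] divide_simps)

lemma fps_to_fls_delta_fps: "1 \<le> N \<Longrightarrow> fps_to_fls (delta_fps t N) = gf_delta fls_X (fls_const t) N"
  using fls.nat_neq_v[of N] fls.nat_neq_t_v[of N]
  by (simp add: delta_fps_def gf_delta_def gf_alpha_def fps_to_fls_alpha_fps fls_times_fps_to_fls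
      fps_to_fls_geo_fps fls_const_divide_const[symmetric] fls_of_nat[symmetric] divide_simps)

definition rhs_fps :: "real \<Rightarrow> nat \<Rightarrow> nat \<Rightarrow> real fps" where
  "rhs_fps t N k = Abs_fps (rhs_trunc t N k)"

lemma rhs_fps_Suc:
  assumes "1 \<le> k"
  shows "rhs_fps t (Suc M) k = rhs_fps t M k + fps_const (1 / real (Suc M) ^ k) * delta_fps t (Suc M)
           - alpha_fps (Suc M) * (\<Sum>a = 1..k. fps_const (1 / real (Suc M) ^ a) * rhs_fps t M (k - a))"
proof (rule fps_ext)
  fix l
  define N where "N = real (Suc M)"
  have "(alpha_fps (Suc M) * (\<Sum>a = 1..k. fps_const (1 / real (Suc M) ^ a) * rhs_fps t M (k - a))) $ l =
      (\<Sum>i = 1..l. 1 / N ^ i * (\<Sum>a = 1..k. 1 / N ^ a * rhs_trunc t M (k - a) (l - i)))"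
    unfolding fps_mult_nth alpha_fps_nth
    by (rule sum.mono_neutral_cong_right) (auto simp: fps_sum_nth rhs_fps_def N_def)
  also have "\<dots> = (\<Sum>a = 1..k. \<Sum>b = 1..l. rhs_trunc t M (k - a) (l - b) / N ^ (a + b))"
    by (subst sum.swap) (simp add: sum_distrib_left power_add field_simps)
  finally show "rhs_fps t (Suc M) k $ l = (rhs_fps t M k + fps_const (1 / real (Suc M) ^ k) * delta_fps t (Suc M)
      - alpha_fps (Suc M) * (\<Sum>a = 1..k. fps_const (1 / real (Suc M) ^ a) * rhs_fps t M (k - a))) $ l"
    by (simp add: rhs_fps_def rhs_trunc_Suc[OF assms] delta_fps_nth N_def power_add)
qed

lemma fps_to_fls_rhs_fps_Suc:
  "fps_to_fls (rhs_fps t (Suc M) (Suc j)) =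
     fps_to_fls (rhs_fps t M (Suc j)) + gf_delta fls_X (fls_const t) (Suc M) / of_nat (Suc M) ^ Suc j
     - gf_alpha fls_X (Suc M) * (\<Sum>a = 1..j. fps_to_fls (rhs_fps t M (Suc j - a)) / of_nat (Suc M) ^ a)"
proof -
  have "rhs_fps t M 0 = 0"
    by (rule fps_ext) (simp add: rhs_fps_def rhs_trunc_0_left)
  then have "rhs_fps t (Suc M) (Suc j) = rhs_fps t M (Suc j) + fps_const (1 / real (Suc M) ^ Suc j) * delta_fps t (Suc M)
      - alpha_fps (Suc M) * (\<Sum>a = 1..j. fps_const (1 / real (Suc M) ^ a) * rhs_fps t M (Suc j - a))"
    using rhs_fps_Suc[of "Suc j" t M] by (simp add: sum.cl_ivl_Suc)
  then show ?thesis
    by (simp add: fls_times_fps_to_fls fps_to_fls_sum fps_to_fls_alpha_fps fps_to_fls_delta_fps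
        fls_const_one_over_nat_power del: of_nat_Suc power_Suc)
qed

lemma gf_sum_eq_rhs_fps: "1 \<le> k \<Longrightarrow> gf_sum fls_X (fls_const t) M k = fps_to_fls (rhs_fps t M k)"
proof (induction M arbitrary: k)
  case 0
  have "rhs_fps t 0 k = 0"
    by (rule fps_ext) (simp add: rhs_fps_def rhs_trunc_0_right)
  then show ?case by (simp add: gf_sum_def)
next
  case (Suc M)
  then obtain j where k: "k = Suc j" by (cases k) auto
  have "gf_sum fls_X (fls_const t) M (Suc j - a) = fps_to_fls (rhs_fps t M (Suc j - a))" if "a \<in> {1..j}" for a
    using that by (intro Suc.IH) auto
  then have "(\<Sum>a = 1..j. gf_sum fls_X (fls_const t) M (Suc j - a) / of_nat (Suc M) ^ a) =
      (\<Sum>a = 1..j. fps_to_fls (rhs_fps t M (Suc j - a)) / of_nat (Suc M) ^ a)"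
    by (intro sum.cong) simp_all
  then show ?case
    unfolding k fls.gf_sum_Suc fps_to_fls_rhs_fps_Suc Suc.IH[of "Suc j", simplified] by simp
qed

lemma rhs_trunc_eq_sum_coeff:
  assumes "1 \<le> k"
  shows "rhs_trunc t N k l = (\<Sum>n = 1..N. (head_fps t n * tail_fps N n) $ l / real n ^ k)"
proof -
  have "rhs_fps t N k = (\<Sum>n = 1..N. fps_const (1 / real n ^ k) * (head_fps t n * tail_fps N n))"
    using gf_sum_eq_rhs_fps[OF assms, of t N] unfolding gf_sum_eq_fps by simp
  from arg_cong[OF this, of "\<lambda>f. f $ l"] show ?thesis
    by (simp add: rhs_fps_def fps_sum_nth)
qed

section \<open>The error term\<close>

lemma head_tail_fps_nth:
  "(head_fps t n * tail_fps N n) $ l = head_fps t n $ l + (\<Sum>i<l. head_fps t n $ i * tail_fps N n $ (l - i))"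
proof -
  have "tail_fps N n $ 0 = 1"
    by (induction n) (simp_all add: tail_fps_def)
  then show ?thesis
    by (simp add: fps_mult_nth atLeast0AtMost lessThan_Suc_atMost[symmetric])
qed

lemma sum_head_fps_nth:
  assumes "1 \<le> l"
  shows "(\<Sum>n = 1..N. head_fps t n $ l / real n ^ k) = zeta_t_trunc t N (Suc k # replicate (l - 1) 1)"
proof -
  obtain r where "l = Suc r" using assms by (cases l) auto
  then show ?thesis
    by (simp add: zeta_t_trunc_Cons head_fps_nth ones_trunc_def field_simps)
qed

definition coeff_error :: "real \<Rightarrow> nat \<Rightarrow> nat \<Rightarrow> nat \<Rightarrow> real" where
  "coeff_error t N k l = (\<Sum>n = 1..N. (\<Sum>i<l. head_fps t n $ i * tail_fps N n $ (l - i)) / real n ^ k)"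

lemma rhs_trunc_eq_zeta_t_trunc_plus_error:
  assumes "1 \<le> k" "1 \<le> l"
  shows "rhs_trunc t N k l = zeta_t_trunc t N (Suc k # replicate (l - 1) 1) + coeff_error t N k l"
  unfolding rhs_trunc_eq_sum_coeff[OF assms(1)] head_tail_fps_nth add_divide_distrib sum.distrib
    sum_head_fps_nth[OF assms(2)] coeff_error_def ..

lemma zeta_t_trunc_nonneg: "0 \<le> t \<Longrightarrow> 0 \<le> zeta_t_trunc t N ks"
  unfolding zeta_t_trunc_def by (rule sum_list_nonneg) (auto intro!: mult_nonneg_nonneg mzv_trunc_nonneg)

context
  fixes t :: real
  assumes t: "0 \<le> t" "t \<le> 1"
begin

lemma ones_trunc_nonneg: "0 \<le> ones_trunc t n r"
  unfolding ones_trunc_def by (rule zeta_t_trunc_nonneg[OF t(1)])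

lemma ones_trunc_mono:
  assumes "m \<le> n"
  shows "ones_trunc t m r \<le> ones_trunc t n r"
proof (cases r)
  case (Suc r')
  have "0 \<le> ((1 - t) * ones_trunc t (m - 1) r' + t * ones_trunc t m r') / real m" for m
    using t by (intro divide_nonneg_nonneg add_nonneg_nonneg mult_nonneg_nonneg ones_trunc_nonneg) auto
  then show ?thesis
    unfolding Suc ones_trunc_Suc using assms by (intro sum_mono2) auto
qed simp

lemma ones_trunc_le_harm_power: "ones_trunc t n r \<le> harm n ^ r"
proof (induction r arbitrary: n)
  case (Suc r)
  have "ones_trunc t n (Suc r) \<le> (\<Sum>m = 1..n. harm n ^ r / real m)"
    unfolding ones_trunc_Suc
  proof (intro sum_mono divide_right_mono)
    fix m assume m: "m \<in> {1..n}"
    have "ones_trunc t m' r \<le> harm n ^ r" if "m' \<le> n" for m'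
      using Suc.IH[of m'] harm_mono[OF that] harm_nonneg[of m']
      by (meson order_trans power_mono)
    then have "(1 - t) * ones_trunc t (m - 1) r + t * ones_trunc t m r \<le> (1 - t) * harm n ^ r + t * harm n ^ r"
      using m t by (intro add_mono mult_left_mono) auto
    then show "(1 - t) * ones_trunc t (m - 1) r + t * ones_trunc t m r \<le> harm n ^ r"
      by (simp add: algebra_simps)
  qed simp
  also have "\<dots> = harm n ^ r * (\<Sum>m = 1..n. inverse (real m))"
    by (simp add: sum_distrib_left divide_inverse)
  also have "\<dots> = harm n ^ Suc r"
    by (simp add: harm_def)
  finally show ?case .
qed simp

lemma head_fps_nth_nonneg: "0 \<le> head_fps t n $ i"
  unfolding head_fps_nth using t ones_trunc_nonneg
  by (auto intro!: divide_nonneg_nonneg add_nonneg_nonneg mult_nonneg_nonneg)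

lemma head_fps_nth_le:
  assumes "n \<le> N" "i \<le> l"
  shows "head_fps t n $ i \<le> (1 + harm N) ^ l / real n"
proof (cases "i = 0")
  case False
  have "harm n ^ (i - 1) \<le> (1 + harm N :: real) ^ l"
  proof -
    have "harm n ^ (i - 1) \<le> (1 + harm N :: real) ^ (i - 1)"
      using harm_mono[OF assms(1), where 'a = real] harm_nonneg[of n, where 'a = real]
      by (intro power_mono) auto
    also have "\<dots> \<le> (1 + harm N) ^ l"
      using harm_nonneg[of N, where 'a = real] assms(2) by (intro power_increasing) auto
    finally show ?thesis .
  qed
  then have "ones_trunc t m (i - 1) \<le> (1 + harm N) ^ l" if "m \<le> n" for m
    using ones_trunc_mono[OF that, of "i - 1"] ones_trunc_le_harm_power[of n "i - 1"] by linarith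
  then have "(1 - t) * ones_trunc t (n - 1) (i - 1) + t * ones_trunc t n (i - 1) \<le>
      (1 - t) * (1 + harm N) ^ l + t * (1 + harm N) ^ l"
    using t by (intro add_mono mult_left_mono) auto
  then show ?thesis
    using False unfolding head_fps_nth by (simp add: divide_right_mono algebra_simps)
qed (simp add: head_fps_nth harm_nonneg)

end

definition tail_weight :: "nat \<Rightarrow> nat \<Rightarrow> real" where
  "tail_weight N n = (\<Sum>i<n. 1 / real (N - i))"

lemma tail_weight_nonneg: "0 \<le> tail_weight N n"
  by (simp add: tail_weight_def sum_nonneg)

lemma tail_fps_nth_nonneg: "0 \<le> tail_fps N n $ r"
proof (induction n arbitrary: r)
  case (Suc n)
  then show ?case
    by (auto simp: tail_fps_def fps_mult_nth intro!: sum_nonneg mult_nonneg_nonneg)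
qed (simp add: tail_fps_def)

text \<open>The coefficients of prod_i 1 / (1 - x_i X) are the complete homogeneous polynomials
  h_r(x), and h_r(x) <= (sum_i x_i)^r for nonnegative x_i.\<close>
lemma tail_fps_nth_le: "tail_fps N n $ r \<le> tail_weight N n ^ r"
proof (induction n arbitrary: r)
  case (Suc n)
  define x where "x = 1 / real (N - n)"
  have x: "0 \<le> x" by (simp add: x_def)
  have "tail_fps N (Suc n) $ r = (\<Sum>i = 0..r. tail_fps N n $ i * x ^ (r - i))"
    by (simp add: tail_fps_def fps_mult_nth x_def)
  also have "\<dots> \<le> (\<Sum>i = 0..r. of_nat (r choose i) * tail_weight N n ^ i * x ^ (r - i))"
  proof (rule sum_mono)
    fix i assume "i \<in> {0..r}"
    then have "1 \<le> real (r choose i)"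
      by (simp add: Suc_leI zero_less_binomial)
    then have "tail_weight N n ^ i * x ^ (r - i) \<le> of_nat (r choose i) * (tail_weight N n ^ i * x ^ (r - i))"
      using mult_right_mono[of 1 "real (r choose i)" "tail_weight N n ^ i * x ^ (r - i)"] tail_weight_nonneg x
      by simp
    moreover have "tail_fps N n $ i * x ^ (r - i) \<le> tail_weight N n ^ i * x ^ (r - i)"
      using Suc.IH[of i] x by (intro mult_right_mono) auto
    ultimately show "tail_fps N n $ i * x ^ (r - i) \<le> of_nat (r choose i) * tail_weight N n ^ i * x ^ (r - i)"
      by (simp add: mult.assoc)
  qed
  also have "\<dots> = tail_weight N (Suc n) ^ r"
    by (simp add: binomial_ring atLeast0AtMost tail_weight_def x_def)
  finally show ?case .
qed (simp add: tail_fps_def tail_weight_def)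

lemma tail_weight_le_ratio:
  assumes "n \<le> N"
  shows "tail_weight N n \<le> real n / real (N + 1 - n)"
proof -
  have "tail_weight N n \<le> (\<Sum>i<n. 1 / real (N + 1 - n))"
    unfolding tail_weight_def using assms by (intro sum_mono divide_left_mono) auto
  then show ?thesis by simp
qed

lemma tail_weight_le_harm:
  assumes "n \<le> N"
  shows "tail_weight N n \<le> harm N"
proof -
  have "inj_on (\<lambda>i. N - i) {..<n}"
    using assms by (auto simp: inj_on_def)
  then have "tail_weight N n = (\<Sum>m\<in>(\<lambda>i. N - i) ` {..<n}. inverse (real m))"
    by (simp add: tail_weight_def sum.reindex divide_inverse)
  also have "\<dots> \<le> (\<Sum>m = 1..N. inverse (real m))"
    using assms by (intro sum_mono2) auto
  finally show ?thesis by (simp add: harm_def)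
qed

lemma sum_inverse_complementary_products:
  "(\<Sum>n = 1..N. 1 / (real n * real (N + 1 - n))) = 2 * harm N / real (N + 1)"
proof -
  have "(\<Sum>n = 1..N. 1 / (real n * real (N + 1 - n))) =
      (\<Sum>n = 1..N. (1 / real n + 1 / real (N + 1 - n)) / real (N + 1))"
  proof (rule sum.cong[OF refl])
    have partial_fractions: "1 / (a * b) = (1 / a + 1 / b) / (a + b)" if "0 < a" "0 < b" for a b :: real
      using that by (simp add: add_frac_eq add.commute)
    fix n assume "n \<in> {1..N}"
    then have "real (N + 1) = real n + real (N + 1 - n)" "0 < real n" "0 < real (N + 1 - n)"
      by simp_all
    then show "1 / (real n * real (N + 1 - n)) = (1 / real n + 1 / real (N + 1 - n)) / real (N + 1)"
      using partial_fractions by presburger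
  qed
  also have "\<dots> = ((\<Sum>n = 1..N. 1 / real n) + (\<Sum>n = 1..N. 1 / real (N + 1 - n))) / real (N + 1)"
    by (simp only: sum.distrib[symmetric] sum_divide_distrib)
  also have "(\<Sum>n = 1..N. 1 / real (N + 1 - n)) = (\<Sum>n = 1..N. 1 / real n)"
    by (subst sum.atLeastAtMost_rev) simp
  finally show ?thesis
    by (simp add: harm_def divide_inverse)
qed

lemma harm_le_1_plus_ln: "1 \<le> N \<Longrightarrow> harm N \<le> 1 + ln (real N)"
  using euler_mascheroni_sequence_decreasing[of 1 N] by (simp add: harm_def)

context
  fixes t :: real
  assumes t: "0 \<le> t" "t \<le> 1"
begin

lemma coeff_error_summand_le:
  assumes "1 \<le> k" "1 \<le> n" "n \<le> N"
  shows "(\<Sum>i<l. head_fps t n $ i * tail_fps N n $ (l - i)) / real n ^ k \<le>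
           real l * ((1 + harm N) ^ l) ^ 2 / (real n * real (N + 1 - n))"
proof -
  define B :: real where "B = (1 + harm N) ^ l"
  have B: "0 \<le> B"
    by (simp add: B_def harm_nonneg)
  have harm_power_le: "harm N ^ r \<le> B" if "r \<le> l" for r
  proof -
    have "harm N ^ r \<le> (1 + harm N :: real) ^ r"
      by (intro power_mono) (simp_all add: harm_nonneg)
    also have "\<dots> \<le> B"
      unfolding B_def using that by (intro power_increasing) (simp_all add: harm_nonneg)
    finally show ?thesis .
  qed
  have term_le: "head_fps t n $ i * tail_fps N n $ (l - i) \<le> B / real n * (real n / real (N + 1 - n) * B)"
    if i: "i < l" for i
  proof (rule mult_mono)
    show "head_fps t n $ i \<le> B / real n"
      unfolding B_def using t assms i by (intro head_fps_nth_le) auto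
    have "tail_weight N n ^ (l - i - 1) \<le> B"
      using power_mono[OF tail_weight_le_harm[OF assms(3)] tail_weight_nonneg, of "l - i - 1"]
        harm_power_le[of "l - i - 1"] by linarith
    then have "tail_weight N n * tail_weight N n ^ (l - i - 1) \<le> real n / real (N + 1 - n) * B"
      by (rule mult_mono[OF tail_weight_le_ratio[OF assms(3)]]) (simp_all add: tail_weight_nonneg)
    moreover have "tail_fps N n $ (l - i) \<le> tail_weight N n * tail_weight N n ^ (l - i - 1)"
      using tail_fps_nth_le[of N n "l - i"] i by (simp add: Suc_diff_Suc flip: power_Suc)
    ultimately show "tail_fps N n $ (l - i) \<le> real n / real (N + 1 - n) * B"
      by (rule order_trans[rotated])
  qed (simp_all add: B tail_fps_nth_nonneg)
  have "(\<Sum>i<l. head_fps t n $ i * tail_fps N n $ (l - i)) \<le>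
      (\<Sum>i<l. B / real n * (real n / real (N + 1 - n) * B))"
    by (rule sum_mono) (rule term_le, simp)
  also have "\<dots> = real l * (B ^ 2 / real (N + 1 - n))"
    using assms by (simp add: power2_eq_square)
  finally have sum_le: "(\<Sum>i<l. head_fps t n $ i * tail_fps N n $ (l - i)) \<le> real l * (B ^ 2 / real (N + 1 - n))" .
  have "(\<Sum>i<l. head_fps t n $ i * tail_fps N n $ (l - i)) / real n ^ k \<le>
      (\<Sum>i<l. head_fps t n $ i * tail_fps N n $ (l - i)) / real n"
    using assms t power_increasing[of 1 k "real n"]
    by (intro divide_left_mono sum_nonneg mult_nonneg_nonneg head_fps_nth_nonneg tail_fps_nth_nonneg) auto
  also have "\<dots> \<le> real l * (B ^ 2 / real (N + 1 - n)) / real n"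
    using sum_le by (rule divide_right_mono) simp
  finally show ?thesis
    by (simp add: B_def mult.commute)
qed

lemma coeff_error_nonneg: "0 \<le> coeff_error t N k l"
  unfolding coeff_error_def using t
  by (intro sum_nonneg divide_nonneg_nonneg mult_nonneg_nonneg head_fps_nth_nonneg tail_fps_nth_nonneg) auto

lemma coeff_error_le:
  assumes "1 \<le> k"
  shows "coeff_error t N k l \<le> real l * ((1 + harm N) ^ l) ^ 2 * (2 * harm N / real (N + 1))"
proof -
  have "coeff_error t N k l \<le> (\<Sum>n = 1..N. real l * ((1 + harm N) ^ l) ^ 2 * (1 / (real n * real (N + 1 - n))))"
    unfolding coeff_error_def using coeff_error_summand_le[OF assms] by (intro sum_mono) simp
  also have "\<dots> = real l * ((1 + harm N) ^ l) ^ 2 * (2 * harm N / real (N + 1))"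
    by (simp only: sum_distrib_left[symmetric] sum_inverse_complementary_products)
  finally show ?thesis .
qed

lemma coeff_error_tendsto_0:
  assumes "1 \<le> k"
  shows "(\<lambda>N. coeff_error t N k l) \<longlonglongrightarrow> 0"
proof (rule tendsto_sandwich[OF always_eventually eventually_sequentiallyI])
  show "\<forall>N. 0 \<le> coeff_error t N k l"
    using coeff_error_nonneg by blast
  show "coeff_error t N k l \<le> 2 * real l * ((2 + ln (real N)) ^ (2 * l + 1) / (real N + 1))" if "1 \<le> N" for N
  proof -
    have H: "harm N \<le> 1 + ln (real N)" "0 \<le> (harm N :: real)" "0 \<le> ln (real N)"
      using harm_le_1_plus_ln[OF that] harm_nonneg[of N, where 'a = real] that by simp_all
    have "((1 + harm N) ^ l) ^ 2 * harm N \<le> ((2 + ln (real N)) ^ l) ^ 2 * (2 + ln (real N))"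
      using H by (intro mult_mono power_mono) auto
    also have "\<dots> = (2 + ln (real N)) ^ (2 * l + 1)"
      by (simp add: power_mult[symmetric] power_add mult.commute)
    finally have X: "((1 + harm N) ^ l) ^ 2 * harm N \<le> (2 + ln (real N)) ^ (2 * l + 1)" .
    have "coeff_error t N k l \<le> real l * ((1 + harm N) ^ l) ^ 2 * (2 * harm N / real (N + 1))"
      by (rule coeff_error_le[OF assms])
    also have "\<dots> = 2 * real l * (((1 + harm N) ^ l) ^ 2 * harm N / (real N + 1))"
      by (simp add: field_simps)
    also have "\<dots> \<le> 2 * real l * ((2 + ln (real N)) ^ (2 * l + 1) / (real N + 1))"
      by (intro mult_left_mono divide_right_mono X) auto
    finally show ?thesis .
  qed
  have "(\<lambda>N::nat. (2 + ln (real N)) ^ (2 * l + 1) / (real N + 1)) \<longlonglongrightarrow> 0"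
    by real_asymp
  then show "(\<lambda>N. 2 * real l * ((2 + ln (real N)) ^ (2 * l + 1) / (real N + 1))) \<longlonglongrightarrow> 0"
    by (rule tendsto_mult_right_zero)
qed simp

end

section \<open>The right-hand side in terms of Z^t\<close>

definition comb_eval :: "(letter list \<Rightarrow> real poly) \<Rightarrow> comb \<Rightarrow> real poly" where
  "comb_eval g a = (\<Sum>(c, w) \<leftarrow> a. c * g w)"

lemma comb_eval_Nil [simp]: "comb_eval g [] = 0"
  by (simp add: comb_eval_def)

lemma comb_eval_Cons [simp]: "comb_eval g ((c, w) # a) = c * g w + comb_eval g a"
  by (simp add: comb_eval_def)

lemma comb_eval_append [simp]: "comb_eval g (a @ b) = comb_eval g a + comb_eval g b"
  by (simp add: comb_eval_def)

lemma comb_eval_map_scaled: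
  "comb_eval g (map (\<lambda>(c, v). (c * d, f v)) a) = d * comb_eval (\<lambda>v. g (f v)) a"
  by (induction a) (auto simp: algebra_simps)

lemma comb_eval_map:
  "comb_eval g (map (\<lambda>(c, v). (c, f v)) a) = comb_eval (\<lambda>v. g (f v)) a"
  by (induction a) auto

lemma comb_eval_add: "comb_eval (\<lambda>w. g w + h w) a = comb_eval g a + comb_eval h a"
  by (induction a) (auto simp: algebra_simps)

lemma comb_eval_const_mult: "comb_eval (\<lambda>w. d * g w) a = d * comb_eval g a"
  by (induction a) (auto simp: algebra_simps)

lemma comb_eval_cong: "(\<And>c w. (c, w) \<in> set a \<Longrightarrow> g w = h w) \<Longrightarrow> comb_eval g a = comb_eval h a"
proof (induction a)
  case (Cons x a)
  obtain c w where x: "x = (c, w)" by (cases x)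
  with Cons have "g w = h w" "comb_eval g a = comb_eval h a" by auto
  then show ?case by (simp add: x)
qed simp

lemma comb_eval_sigma_Y:
  "comb_eval G (sigma_t (Y # z)) =
     [:0, 1:] * comb_eval (\<lambda>v. G (X # v)) (sigma_t z) + comb_eval (\<lambda>v. G (Y # v)) (sigma_t z)"
  by (simp only: sigma_t.simps comb_eval_append comb_eval_map_scaled comb_eval_map)

lemma comb_eval_sigma_replicate_X:
  "comb_eval G (sigma_t (replicate m X @ z)) = comb_eval (\<lambda>v. G (replicate m X @ v)) (sigma_t z)"
  by (induction m arbitrary: G) (simp_all add: comb_eval_map)

fun index_word :: "nat list \<Rightarrow> letter list" where
  "index_word [] = []"
| "index_word (a # as) = replicate (a - 1) X @ Y # index_word as"

lemma index_word_eq_Nil_iff [simp]: "index_word as = [] \<longleftrightarrow> as = []"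
  by (cases as) auto

lemma index_word_last: "as \<noteq> [] \<Longrightarrow> index_word as \<noteq> [] \<and> last (index_word as) = Y"
  by (induction as) auto

lemma word_idx_index_word: "\<forall>a\<in>set as. 1 \<le> a \<Longrightarrow> word_idx (index_word as) 0 = as"
proof -
  have "word_idx (replicate m X @ w) c = word_idx w (c + m)" for m w c
    by (induction m arbitrary: c) auto
  then show "\<forall>a\<in>set as. 1 \<le> a \<Longrightarrow> word_idx (index_word as) 0 = as"
    by (induction as) auto
qed

lemma Z_word_index_word:
  assumes "admissible as"
  shows "Z_word (index_word as) = mzv as"
proof -
  obtain a r where as: "as = a # r" "2 \<le> a" "\<forall>x\<in>set r. 1 \<le> x"
    using assms by (cases as) (auto simp: admissible_def)
  then have "hd (index_word as) = X"
    by (cases "a - 1") auto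
  then show ?thesis
    using index_word_last[of as] word_idx_index_word[of as] as by (simp add: Z_word_def)
qed

lemma elt_Cons_Cons:
  "elt (a # b # rest) =
     map (\<lambda>(d, w). (d * - [:0, 1:], replicate (a - 1) X @ X # w)) (elt (b # rest)) @
     map (\<lambda>(d, w). (d, replicate (a - 1) X @ Y # w)) (elt (b # rest))"
  by (simp add: cmul_def mty_def mult.commute)

lemma elt_words_end_in_Y: "as \<noteq> [] \<Longrightarrow> (c, w) \<in> set (elt as) \<Longrightarrow> w \<noteq> [] \<and> last w = Y"
  by (induction as arbitrary: c w rule: elt.induct) (auto simp: elt_Cons_Cons simp del: elt.simps(3))

text \<open>Since sigma_t maps -t x + y to y, S_t removes the twist from the separating letters of
  elt as and leaves the word z_{a_1} ... z_{a_n} of as.\<close>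
lemma comb_eval_sigma_elt:
  "as \<noteq> [] \<Longrightarrow> comb_eval (\<lambda>w. comb_eval G (sigma_t (butlast w))) (elt as) = G (butlast (index_word as))"
proof (induction as arbitrary: G rule: elt.induct)
  case (2 a)
  then show ?case
    using comb_eval_sigma_replicate_X[where z = "[]"] by (simp add: butlast_append)
next
  case (3 a b rest)
  define u where "u = replicate (a - 1) X"
  define E where "E = elt (b # rest)"
  have butlast: "butlast (u @ x # w) = u @ x # butlast w" if "(c, w) \<in> set E" for c w x
    using elt_words_end_in_Y[of "b # rest" c w] that by (simp add: E_def butlast_append)
  have "comb_eval (\<lambda>w. comb_eval G (sigma_t (butlast w))) (elt (a # b # rest)) =
      - [:0, 1:] * comb_eval (\<lambda>w. comb_eval G (sigma_t (butlast (u @ X # w)))) E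
      + comb_eval (\<lambda>w. comb_eval G (sigma_t (butlast (u @ Y # w)))) E"
    unfolding elt_Cons_Cons u_def[symmetric] E_def[symmetric]
    by (simp only: comb_eval_append comb_eval_map_scaled comb_eval_map)
  also have "comb_eval (\<lambda>w. comb_eval G (sigma_t (butlast (u @ X # w)))) E =
      comb_eval (\<lambda>w. comb_eval (\<lambda>v. G (u @ X # v)) (sigma_t (butlast w))) E"
    by (rule comb_eval_cong) (simp only: butlast, simp add: u_def comb_eval_sigma_replicate_X comb_eval_map)
  also have "comb_eval (\<lambda>w. comb_eval G (sigma_t (butlast (u @ Y # w)))) E =
      comb_eval (\<lambda>w. [:0, 1:] * comb_eval (\<lambda>v. G (u @ X # v)) (sigma_t (butlast w))
        + comb_eval (\<lambda>v. G (u @ Y # v)) (sigma_t (butlast w))) E"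
    by (rule comb_eval_cong) (simp only: butlast, simp add: u_def comb_eval_sigma_replicate_X comb_eval_sigma_Y del: sigma_t.simps)
  finally have "comb_eval (\<lambda>w. comb_eval G (sigma_t (butlast w))) (elt (a # b # rest)) =
      comb_eval (\<lambda>w. comb_eval (\<lambda>v. G (u @ Y # v)) (sigma_t (butlast w))) E"
    by (simp only: comb_eval_add comb_eval_const_mult)
  also have "\<dots> = G (u @ Y # butlast (index_word (b # rest)))"
    unfolding E_def by (rule "3.IH") simp
  finally show ?case
    by (simp add: u_def butlast_append)
qed simp

lemma Zt_comb_elt: "admissible as \<Longrightarrow> Zt_comb (elt as) = [:mzv as:]"
proof -
  assume as: "admissible as"
  then have "as \<noteq> []" by (auto simp: admissible_def)
  have "Zt_comb (elt as) = comb_eval (\<lambda>w. comb_eval (\<lambda>v. [:Z_word (v @ [Y]):]) (sigma_t (butlast w))) (elt as)"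
    unfolding Zt_comb_def Z_comb_def comb_eval_def[symmetric]
  proof (rule comb_eval_cong)
    fix c w assume "(c, w) \<in> set (elt as)"
    then have "S_t w = map (\<lambda>(c, v). (c, v @ [Y])) (sigma_t (butlast w))"
      using elt_words_end_in_Y \<open>as \<noteq> []\<close> by (simp add: S_t_def)
    then show "comb_eval (\<lambda>w. [:Z_word w:]) (S_t w) = comb_eval (\<lambda>v. [:Z_word (v @ [Y]):]) (sigma_t (butlast w))"
      by (simp add: comb_eval_map)
  qed
  also have "\<dots> = [:Z_word (butlast (index_word as) @ [Y]):]"
    using \<open>as \<noteq> []\<close> by (rule comb_eval_sigma_elt)
  also have "butlast (index_word as) @ [Y] = index_word as"
    using index_word_last[OF \<open>as \<noteq> []\<close>] by (metis append_butlast_last_id)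
  finally show ?thesis
    by (simp add: Z_word_index_word[OF as])
qed

section \<open>Passing to the limit\<close>

lemma mzv_star_eq_poly_zeta_t_1:
  assumes "admissible ks"
  shows "mzv_star ks = poly (zeta_t ks) 1"
proof (rule LIMSEQ_unique[OF mzv_star_trunc_tendsto[OF assms]])
  show "(\<lambda>N. mzv_star_trunc N ks) \<longlonglongrightarrow> poly (zeta_t ks) 1"
    using zeta_t_trunc_tendsto[OF assms, of 1] by (simp add: zeta_t_trunc_1)
qed

lemma rhs_trunc_tendsto:
  "(\<lambda>N. rhs_trunc t N k l) \<longlonglongrightarrow>
     (\<Sum>j = 1..k. (-1) ^ (j - 1) *
        (\<Sum>ks\<in>comps j k. \<Sum>ls\<in>comps j l. poly (geom (last ls)) t * mzv (map2 (+) ks ls)))"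
  unfolding rhs_trunc_def comp_sum_def
  by (intro tendsto_sum tendsto_mult tendsto_const mzv_trunc_tendsto admissible_map2_comps) auto

lemma poly_zeta_t_eq_rhs:
  assumes "0 \<le> t" "t \<le> 1" "1 \<le> k" "1 \<le> l"
  shows "poly (zeta_t (Suc k # replicate (l - 1) 1)) t =
           (\<Sum>j = 1..k. (-1) ^ (j - 1) *
              (\<Sum>ks\<in>comps j k. \<Sum>ls\<in>comps j l. poly (geom (last ls)) t * mzv (map2 (+) ks ls)))"
proof (rule LIMSEQ_unique)
  show "(\<lambda>N. rhs_trunc t N k l) \<longlonglongrightarrow> poly (zeta_t (Suc k # replicate (l - 1) 1)) t"
    unfolding rhs_trunc_eq_zeta_t_trunc_plus_error[OF assms(3,4)]
    using tendsto_add[OF zeta_t_trunc_tendsto coeff_error_tendsto_0[OF assms(1-3)]] assms(3)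
    by simp
qed (rule rhs_trunc_tendsto)

lemma poly_eq_on_infinite:
  fixes p q :: "'a::idom poly"
  assumes "infinite A" "\<And>x. x \<in> A \<Longrightarrow> poly p x = poly q x"
  shows "p = q"
proof (rule ccontr)
  assume "p \<noteq> q"
  then have "finite {x. poly (p - q) x = 0}"
    by (intro poly_roots_finite) simp
  moreover have "A \<subseteq> {x. poly (p - q) x = 0}"
    using assms(2) by auto
  ultimately show False
    using assms(1) finite_subset by blast
qed

lemma sum_comps_upto_min:
  "(\<Sum>j = 1..min k l. c j * (\<Sum>ks\<in>comps j k. \<Sum>ls\<in>comps j l. F ks ls)) =
     (\<Sum>j = 1..k. c j * (\<Sum>ks\<in>comps j k. \<Sum>ls\<in>comps j l. F ks ls :: 'a :: comm_ring_1))"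
  by (rule sum.mono_neutral_left) (auto simp: comps_eq_empty)

lemma zeta_t_eq_rhs:
  assumes "1 \<le> k" "1 \<le> l"
  shows "zeta_t (Suc k # replicate (l - 1) 1) =
           (\<Sum>j = 1..min k l. (-1) ^ (j - 1) *
              (\<Sum>ks\<in>comps j k. \<Sum>ls\<in>comps j l. geom (last ls) * [:mzv (map2 (+) ks ls):]))"
proof (rule poly_eq_on_infinite[of "{0..1 :: real}"])
  fix t :: real assume "t \<in> {0..1}"
  then have "poly (zeta_t (Suc k # replicate (l - 1) 1)) t =
      (\<Sum>j = 1..k. (-1) ^ (j - 1) *
         (\<Sum>ks\<in>comps j k. \<Sum>ls\<in>comps j l. poly (geom (last ls)) t * mzv (map2 (+) ks ls)))"
    using assms by (intro poly_zeta_t_eq_rhs) auto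
  also have "\<dots> = poly (\<Sum>j = 1..min k l. (-1) ^ (j - 1) *
      (\<Sum>ks\<in>comps j k. \<Sum>ls\<in>comps j l. geom (last ls) * [:mzv (map2 (+) ks ls):])) t"
    by (subst sum_comps_upto_min) (simp add: poly_sum mult.commute)
  finally show "poly (zeta_t (Suc k # replicate (l - 1) 1)) t = \<dots>" .
qed simp

theorem theorem3p6:
  fixes k l :: nat
  assumes "1 \<le> k" and "1 \<le> l"
  shows "(zeta_t (Suc k # replicate (l - 1) 1) =
           (\<Sum>j = 1..min k l. (-1) ^ (j - 1) *
              (\<Sum>ks\<in>comps j k. \<Sum>ls\<in>comps j l.
                 geom (last ls) * Zt_comb (elt (map2 (+) ks ls))))) \<and>
         (zeta_t (Suc k # replicate (l - 1) 1) =
           (\<Sum>j = 1..min k l. (-1) ^ (j - 1) *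
              (\<Sum>ks\<in>comps j k. \<Sum>ls\<in>comps j l.
                 geom (last ls) * [:mzv (map2 (+) ks ls):]))) \<and>
         (mzv_star (Suc k # replicate (l - 1) 1) =
           (\<Sum>j = 1..min k l. (-1) ^ (j - 1) *
              (\<Sum>ks\<in>comps j k. \<Sum>ls\<in>comps j l.
                 real (last ls) * mzv (map2 (+) ks ls))))"
proof (intro conjI)
  show zeta_t: "zeta_t (Suc k # replicate (l - 1) 1) =
      (\<Sum>j = 1..min k l. (-1) ^ (j - 1) *
         (\<Sum>ks\<in>comps j k. \<Sum>ls\<in>comps j l. geom (last ls) * [:mzv (map2 (+) ks ls):]))"
    using assms by (rule zeta_t_eq_rhs)
  show "zeta_t (Suc k # replicate (l - 1) 1) =
      (\<Sum>j = 1..min k l. (-1) ^ (j - 1) *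
         (\<Sum>ks\<in>comps j k. \<Sum>ls\<in>comps j l. geom (last ls) * Zt_comb (elt (map2 (+) ks ls))))"
    unfolding zeta_t by (intro sum.cong refl arg_cong2[where f = times]) (auto simp: Zt_comb_elt admissible_map2_comps)
  have "mzv_star (Suc k # replicate (l - 1) 1) = poly (zeta_t (Suc k # replicate (l - 1) 1)) 1"
    using assms by (intro mzv_star_eq_poly_zeta_t_1) simp
  also have "\<dots> = (\<Sum>j = 1..min k l. (-1) ^ (j - 1) *
      (\<Sum>ks\<in>comps j k. \<Sum>ls\<in>comps j l. real (last ls) * mzv (map2 (+) ks ls)))"
    unfolding zeta_t by (simp add: poly_sum poly_geom mult.commute)
  finally show "mzv_star (Suc k # replicate (l - 1) 1) = \<dots>" .
qed

end
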